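(* Consider the linear Gaussian pairwise Markov model $$\alpha_{k+1}=T\alpha_k+By_{k-1}+\eta_k,\qquad y_k=Z\alpha_k+\beta y_{k-1}+\varepsilon_k,\qquad \begin{bmatrix}\eta_k\\ \varepsilon_k\end{bmatrix}\sim\mathcal N\!\left(0,\begin{bmatrix}Q&S\\ S^\top&H\end{bmatrix}\right),$$ $\alpha_0\sim\mathcal N(\bar\alpha_0,\Pi_0)$, $\Pi_0>0$, $H>0$, where $T,B,Z,\beta,Q,S,H,\bar\alpha_0,\Pi_0$ depend differentiably on $\theta\in\mathbb R^p$ while the observations $y_k$ (including the given initial values used below) do not depend on $\theta$. Write $\partial_iA:=\partial A/\partial\theta_i$, $\overline T=T-SH^{-1}Z$, $\overline B=B-SH^{-1}\beta$, $\overline Q=Q-SH^{-1}S^\top$. Algorithm 2a (UD-based pairwise Kalman filter): factor $\Pi_0=\bar U_{\Pi_0}D_{\Pi_0}\bar U_{\Pi_0}^\top$, $H=\bar U_HD_H\bar U_H^\top$, $\overline Q=\bar U_{\overline Q}D_{\overline Q}\bar U_{\overline Q}^\top$; set $\hat\alpha_{0|0}=\bar\alpha_0$, $\bar U_{P_{0|0}}=\bar U_{\Pi_0}$, $D_{P_{0|0}}=D_{\Pi_0}$; for $k=0,\dots,N-1$: $\hat\alpha_{k+1|k}=\overline T\hat\alpha_{k|k}+\overline By_{k-1}+SH^{-1}y_k$; MWGS on $\mathbb A^\top=[\overline T\bar U_{P_{k|k}}\ \bar U_{\overline Q}]$, $\mathbb D_A=D_{P_{k|k}}\oplus D_{\overline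 Q}$ gives $\mathbb R=\bar U_{P_{k+1|k}}$, $\mathbb D_R=D_{P_{k+1|k}}$; MWGS on $\mathbb A^\top=\begin{bmatrix}\bar U_{P_{k+1|k}}&0\\ Z\bar U_{P_{k+1|k}}&\bar U_H\end{bmatrix}$, $\mathbb D_A=D_{P_{k+1|k}}\oplus D_H$ gives $\mathbb R=\begin{bmatrix}\bar U_{P_{k+1|k+1}}&\bar K_{k+1}^u\\0&\bar U_{R_{e,k+1}}\end{bmatrix}$, $\mathbb D_R=D_{P_{k+1|k+1}}\oplus D_{R_{e,k+1}}$; $e_{k+1}=y_{k+1}-Z\hat\alpha_{k+1|k}-\beta y_k$, $\bar e_{k+1}=\bar U_{R_{e,k+1}}^{-1}e_{k+1}$, $\hat\alpha_{k+1|k+1}=\hat\alpha_{k+1|k}+\bar K_{k+1}^u\bar e_{k+1}$. Algorithm 2b (differentiated UD-based pairwise Kalman filter): for each $i=1,\dots,p$, in addition to Algorithm 2a, it initializes $\partial_i\bar U_{P_{0|0}}=\partial_i\bar U_{\Pi_0}$, $\partial_iD_{P_{0|0}}=\partial_iD_{\Pi_0}$, $\partial_i\hat\alpha_{0|0}=\partial_i\bar\alpha_0$ (using $\partial_i\overline T,\partial_i\overline B,\partial_i\overline Q$ and derivatives of the factors of $\overline Q$, $H$), and for $k=0,\dots,N-1$ computes: (a) $\partial_i\hat\alpha_{k+1|k}=(\partial_i\overline T)\hat\alpha_{k|k}+\overline T\,\partial_i\hat\alpha_{k|k}+(\partial_i\overline B)y_{k-1}+(\partial_iS)H^{-1}y_k-SH^{-1}(\partial_iH)H^{-1}y_k$;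 (b) in both MWGS steps, forms the pre-arrays of Algorithm 2a and their derivatives $\partial_i\mathbb A,\partial_i\mathbb D_A$, applies the Diff. UD scheme below, and reads off $\partial_i\bar U_{P_{k+1|k}},\partial_iD_{P_{k+1|k}},\partial_i\bar U_{P_{k+1|k+1}},\partial_iD_{P_{k+1|k+1}},\partial_i\bar U_{R_{e,k+1}},\partial_iD_{R_{e,k+1}},\partial_i\bar K_{k+1}^u$ from the positions of the corresponding undifferentiated blocks; (c) $\partial_i\bar e_{k+1}=-\bar U_{R_{e,k+1}}^{-1}(\partial_i\bar U_{R_{e,k+1}})\bar U_{R_{e,k+1}}^{-1}e_{k+1}-\bar U_{R_{e,k+1}}^{-1}\big[(\partial_iZ)\hat\alpha_{k+1|k}+Z\,\partial_i\hat\alpha_{k+1|k}+(\partial_i\beta)y_k\big]$; (d) $\partial_i\hat\alpha_{k+1|k+1}=\partial_i\hat\alpha_{k+1|k}+(\partial_i\bar K_{k+1}^u)\bar e_{k+1}+\bar K_{k+1}^u\,\partial_i\bar e_{k+1}$. Diff. UD scheme with inputs $\mathbb A,\mathbb D_A,\partial_i\mathbb A,\partial_i\mathbb D_A$: apply MWGS to get $\mathfrak W,\mathbb R,\mathbb D_R$; $M_0=\mathfrak W^\top\mathbb D_A(\partial_i\mathbb A)\mathbb R^{-\top}=\bar L_0+D_0+\bar U_0$ and $M_2=\mathfrak W^\top(\partial_i\mathbb D_A)\mathfrak W=\bar L_2+D_2+\bar U_2$ (strictly lower, diagonal, strictly upper parts); output $\partial_i\mathbb R=\mathbb R(\bar L_0^\top+\bar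 U_0+\bar U_2)\mathbb D_R^{-1}$, $\partial_i\mathbb D_R=2D_0+D_2$. Then Algorithm 2b computes the filter sensitivities of Algorithm 2a correctly: for every $k$ and $i$, the quantities it produces as $\partial_i\hat\alpha_{k+1|k}$, $\partial_i\bar U_{P_{k+1|k}}$, $\partial_iD_{P_{k+1|k}}$, $\partial_i\bar U_{P_{k+1|k+1}}$, $\partial_iD_{P_{k+1|k+1}}$, $\partial_i\bar U_{R_{e,k+1}}$, $\partial_iD_{R_{e,k+1}}$, $\partial_i\bar K_{k+1}^u$, $\partial_i\bar e_{k+1}$, $\partial_i\hat\alpha_{k+1|k+1}$ equal the partial derivatives with respect to $\theta_i$ of the corresponding quantities of Algorithm 2a, regarded as functions of $\theta$.
   Context: $UDU^\top$ factorization: $P=\bar U_PD_P\bar U_P^\top$ with $\bar U_P$ unit upper triangular and $D_P$ diagonal. $A\oplus B:=\mathrm{diag}\{A,B\}$. MWGS: given $\mathbb A\in\mathbb R^{r\times s}$ ($r\ge s$) and diagonal $\mathbb D_A>0$, it returns $\mathfrak W\in\mathbb R^{r\times s}$, a unit upper triangular $\mathbb R\in\mathbb R^{s\times s}$ and a diagonal $\mathbb D_R$ with $\mathbb A^\top=\mathbb R\mathfrak W^\top$ and $\mathfrak W^\top\mathbb D_A\mathfrak W=\mathbb D_R$. It is assumed that every MWGS call is well defined (with $\mathbb D_R$ invertible) and that all quantities are differentiable in $\theta$. *)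

theory Defs
  imports "Jordan_Normal_Form.Matrix"
begin

definition minv :: "real mat \<Rightarrow> real mat" where
  "minv A = (SOME B. B \<in> carrier_mat (dim_col A) (dim_row A) \<and> inverts_mat A B \<and> inverts_mat B A)"

definition unit_upper :: "real mat \<Rightarrow> bool" where
  "unit_upper U \<longleftrightarrow> square_mat U \<and> upper_triangular U \<and> (\<forall>j<dim_row U. U $$ (j,j) = 1)"

definition pos_def :: "real mat \<Rightarrow> bool" where
  "pos_def A \<longleftrightarrow> (\<exists>n. A \<in> carrier_mat n n \<and> A\<^sup>T = A \<and>
     (\<forall>x\<in>carrier_vec n. x \<noteq> 0\<^sub>v n \<longrightarrow> x \<bullet> (A *\<^sub>v x) > 0))"

definition pos_semidef :: "real mat \<Rightarrow> bool" where
  "pos_semidef A \<longleftrightarrow> (\<exists>n. A \<in> carrier_mat n n \<and> A\<^sup>T = A \<and>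
     (\<forall>x\<in>carrier_vec n. x \<bullet> (A *\<^sub>v x) \<ge> 0))"

definition ud_fact :: "real mat \<Rightarrow> real mat \<Rightarrow> real mat \<Rightarrow> bool" where
  "ud_fact P U D \<longleftrightarrow> (\<exists>n. P \<in> carrier_mat n n \<and> U \<in> carrier_mat n n \<and> D \<in> carrier_mat n n \<and>
     unit_upper U \<and> diagonal_mat D \<and> P = U * D * U\<^sup>T)"

text \<open>Direct sum diag(A,B) and horizontal concatenation [A B].\<close>
definition bdiag :: "real mat \<Rightarrow> real mat \<Rightarrow> real mat" where
  "bdiag A B = four_block_mat A (0\<^sub>m (dim_row A) (dim_col B)) (0\<^sub>m (dim_row B) (dim_col A)) B"

definition hcat :: "real mat \<Rightarrow> real mat \<Rightarrow> real mat" where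
  "hcat A B = four_block_mat A B (0\<^sub>m 0 (dim_col A)) (0\<^sub>m 0 (dim_col B))"

definition slow :: "real mat \<Rightarrow> real mat" where
  "slow M = mat (dim_row M) (dim_col M) (\<lambda>(r,c). if c < r then M $$ (r,c) else 0)"
definition sdiag :: "real mat \<Rightarrow> real mat" where
  "sdiag M = mat (dim_row M) (dim_col M) (\<lambda>(r,c). if c = r then M $$ (r,c) else 0)"
definition supp :: "real mat \<Rightarrow> real mat" where
  "supp M = mat (dim_row M) (dim_col M) (\<lambda>(r,c). if r < c then M $$ (r,c) else 0)"

definition mwgs_spec :: "real mat \<Rightarrow> real mat \<Rightarrow> real mat \<Rightarrow> real mat \<Rightarrow> real mat \<Rightarrow> bool" where
  "mwgs_spec A DA W R DR \<longleftrightarrow>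
     (let r = dim_row A; s = dim_col A in
      s \<le> r \<and> DA \<in> carrier_mat r r \<and> diagonal_mat DA \<and> (\<forall>j<r. DA $$ (j,j) > 0) \<and>
      W \<in> carrier_mat r s \<and> R \<in> carrier_mat s s \<and> unit_upper R \<and>
      DR \<in> carrier_mat s s \<and> diagonal_mat DR \<and>
      A\<^sup>T = R * W\<^sup>T \<and> W\<^sup>T * DA * W = DR)"

definition mwgs_ok :: "real mat \<Rightarrow> real mat \<Rightarrow> bool" where
  "mwgs_ok A DA \<longleftrightarrow> (\<exists>W R DR. mwgs_spec A DA W R DR \<and> (\<forall>j<dim_col A. DR $$ (j,j) \<noteq> 0))"

definition mwgs :: "real mat \<Rightarrow> real mat \<Rightarrow> real mat \<times> real mat \<times> real mat" where
  "mwgs A DA = (SOME (W,R,DR). mwgs_spec A DA W R DR \<and> (\<forall>j<dim_col A. DR $$ (j,j) \<noteq> 0))"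

definition diff_ud :: "real mat \<Rightarrow> real mat \<Rightarrow> real mat \<Rightarrow> real mat \<Rightarrow> real mat \<times> real mat" where
  "diff_ud A DA dA dDA = (let (W,R,DR) = mwgs A DA;
      M0 = W\<^sup>T * DA * dA * (minv R)\<^sup>T;
      M2 = W\<^sup>T * dDA * W
    in (R * ((slow M0)\<^sup>T + supp M0 + supp M2) * minv DR, 2 \<cdot>\<^sub>m sdiag M0 + sdiag M2))"

text \<open>Model matrices together with the chosen UD factors of Pi_0, H and Qbar.\<close>
record kf_par =
  pT :: "real mat" pB :: "real mat" pZ :: "real mat" pbeta :: "real mat"
  pQ :: "real mat" pS :: "real mat" pH :: "real mat"
  pa0 :: "real vec" pPi0 :: "real mat"
  pUPi :: "real mat" pDPi :: "real mat"
  pUH :: "real mat" pDH :: "real mat"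
  pUQ :: "real mat" pDQ :: "real mat"

definition Hinv :: "kf_par \<Rightarrow> real mat" where "Hinv p = minv (pH p)"
definition Tbar :: "kf_par \<Rightarrow> real mat" where "Tbar p = pT p - pS p * Hinv p * pZ p"
definition Bbar :: "kf_par \<Rightarrow> real mat" where "Bbar p = pB p - pS p * Hinv p * pbeta p"
definition Qbar :: "kf_par \<Rightarrow> real mat" where "Qbar p = pQ p - pS p * Hinv p * (pS p)\<^sup>T"

text \<open>Derivatives (d = record of partial derivatives of the parameters) of derived quantities.\<close>
definition dHinv :: "kf_par \<Rightarrow> kf_par \<Rightarrow> real mat" where
  "dHinv p d = (-1) \<cdot>\<^sub>m (Hinv p * pH d * Hinv p)"
definition dTbar :: "kf_par \<Rightarrow> kf_par \<Rightarrow> real mat" where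
  "dTbar p d = pT d - (pS d * Hinv p * pZ p + pS p * dHinv p d * pZ p + pS p * Hinv p * pZ d)"
definition dBbar :: "kf_par \<Rightarrow> kf_par \<Rightarrow> real mat" where
  "dBbar p d = pB d - (pS d * Hinv p * pbeta p + pS p * dHinv p d * pbeta p + pS p * Hinv p * pbeta d)"

definition pre1 :: "kf_par \<Rightarrow> real mat \<Rightarrow> real mat" where
  "pre1 p U = (hcat (Tbar p * U) (pUQ p))\<^sup>T"
definition pre2 :: "kf_par \<Rightarrow> real mat \<Rightarrow> real mat" where
  "pre2 p U = (four_block_mat U (0\<^sub>m (dim_row U) (dim_col (pUH p))) (pZ p * U) (pUH p))\<^sup>T"

record kf_out =
  o_apred :: "real vec" o_W1 :: "real mat" o_UPp :: "real mat" o_DPp :: "real mat"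
  o_W2 :: "real mat" o_UPu :: "real mat" o_DPu :: "real mat" o_URe :: "real mat" o_DRe :: "real mat"
  o_K :: "real mat" o_e :: "real vec" o_eb :: "real vec" o_aupd :: "real vec"

text \<open>One step k of Algorithm 2a, from state (alpha_{k|k}, U_{P_{k|k}}, D_{P_{k|k}}).
  Observations are indexed by integers (y (-1) is the given initial value).\<close>
definition kf_step :: "kf_par \<Rightarrow> (int \<Rightarrow> real vec) \<Rightarrow> nat \<Rightarrow> real vec \<times> real mat \<times> real mat \<Rightarrow> kf_out" where
  "kf_step p y k st = (case st of (a, U, D) \<Rightarrow>
    let ap = Tbar p *\<^sub>v a + Bbar p *\<^sub>v y (int k - 1) + (pS p * Hinv p) *\<^sub>v y (int k);
        (W1, R1, DR1) = mwgs (pre1 p U) (bdiag D (pDQ p));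
        (W2, R2, DR2) = mwgs (pre2 p R1) (bdiag DR1 (pDH p));
        (UPu, K, _, URe) = split_block R2 (dim_row R1) (dim_row R1);
        (DPu, _, _, DRe) = split_block DR2 (dim_row R1) (dim_row R1);
        e = y (int k + 1) - pZ p *\<^sub>v ap - pbeta p *\<^sub>v y (int k);
        eb = minv URe *\<^sub>v e;
        au = ap + K *\<^sub>v eb
    in \<lparr>o_apred = ap, o_W1 = W1, o_UPp = R1, o_DPp = DR1, o_W2 = W2, o_UPu = UPu, o_DPu = DPu,
        o_URe = URe, o_DRe = DRe, o_K = K, o_e = e, o_eb = eb, o_aupd = au\<rparr>)"

fun kf_filt :: "kf_par \<Rightarrow> (int \<Rightarrow> real vec) \<Rightarrow> nat \<Rightarrow> real vec \<times> real mat \<times> real mat" where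
  "kf_filt p y 0 = (pa0 p, pUPi p, pDPi p)"
| "kf_filt p y (Suc k) = (let ou = kf_step p y k (kf_filt p y k) in (o_aupd ou, o_UPu ou, o_DPu ou))"

definition kf_out :: "kf_par \<Rightarrow> (int \<Rightarrow> real vec) \<Rightarrow> nat \<Rightarrow> kf_out" where
  "kf_out p y k = kf_step p y k (kf_filt p y k)"

definition mwgs_calls_ok :: "kf_par \<Rightarrow> (int \<Rightarrow> real vec) \<Rightarrow> nat \<Rightarrow> bool" where
  "mwgs_calls_ok p y N \<longleftrightarrow> (\<forall>k<N. case kf_filt p y k of (a, U, D) \<Rightarrow>
      mwgs_ok (pre1 p U) (bdiag D (pDQ p)) \<and>
      (case mwgs (pre1 p U) (bdiag D (pDQ p)) of (W1, R1, DR1) \<Rightarrow>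
         mwgs_ok (pre2 p R1) (bdiag DR1 (pDH p))))"

record kf_dout =
  d_apred :: "real vec" d_UPp :: "real mat" d_DPp :: "real mat"
  d_UPu :: "real mat" d_DPu :: "real mat" d_URe :: "real mat" d_DRe :: "real mat"
  d_K :: "real mat" d_eb :: "real vec" d_aupd :: "real vec"

definition kf_dstep :: "kf_par \<Rightarrow> kf_par \<Rightarrow> (int \<Rightarrow> real vec) \<Rightarrow> nat \<Rightarrow>
    real vec \<times> real mat \<times> real mat \<Rightarrow> real vec \<times> real mat \<times> real mat \<Rightarrow> kf_dout" where
  "kf_dstep p d y k st dst = (case st of (a, U, D) \<Rightarrow> case dst of (da, dU, dD) \<Rightarrow>
    let ou = kf_step p y k st;
        dap = dTbar p d *\<^sub>v a + Tbar p *\<^sub>v da + dBbar p d *\<^sub>v y (int k - 1)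
              + (pS d * Hinv p) *\<^sub>v y (int k) - (pS p * Hinv p * pH d * Hinv p) *\<^sub>v y (int k);
        A1 = pre1 p U; DA1 = bdiag D (pDQ p);
        dA1 = (hcat (dTbar p d * U + Tbar p * dU) (pUQ d))\<^sup>T; dDA1 = bdiag dD (pDQ d);
        (dR1, dDR1) = diff_ud A1 DA1 dA1 dDA1;
        R1 = o_UPp ou; DR1 = o_DPp ou;
        A2 = pre2 p R1; DA2 = bdiag DR1 (pDH p);
        dA2 = (four_block_mat dR1 (0\<^sub>m (dim_row R1) (dim_col (pUH p)))
                 (pZ d * R1 + pZ p * dR1) (pUH d))\<^sup>T;
        dDA2 = bdiag dDR1 (pDH d);
        (dR2, dDR2) = diff_ud A2 DA2 dA2 dDA2;
        (dUPu, dK, _, dURe) = split_block dR2 (dim_row R1) (dim_row R1);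
        (dDPu, _, _, dDRe) = split_block dDR2 (dim_row R1) (dim_row R1);
        URe = o_URe ou; K = o_K ou;
        deb = (-1) \<cdot>\<^sub>v ((minv URe * dURe * minv URe) *\<^sub>v o_e ou)
              - minv URe *\<^sub>v (pZ d *\<^sub>v o_apred ou + pZ p *\<^sub>v dap + pbeta d *\<^sub>v y (int k));
        dau = dap + dK *\<^sub>v o_eb ou + K *\<^sub>v deb
    in \<lparr>d_apred = dap, d_UPp = dR1, d_DPp = dDR1, d_UPu = dUPu, d_DPu = dDPu,
        d_URe = dURe, d_DRe = dDRe, d_K = dK, d_eb = deb, d_aupd = dau\<rparr>)"

fun kf_dfilt :: "kf_par \<Rightarrow> kf_par \<Rightarrow> (int \<Rightarrow> real vec) \<Rightarrow> nat \<Rightarrow> real vec \<times> real mat \<times> real mat" where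
  "kf_dfilt p d y 0 = (pa0 d, pUPi d, pDPi d)"
| "kf_dfilt p d y (Suc k) = (let ou = kf_dstep p d y k (kf_filt p y k) (kf_dfilt p d y k)
      in (d_aupd ou, d_UPu ou, d_DPu ou))"

definition kf_dout :: "kf_par \<Rightarrow> kf_par \<Rightarrow> (int \<Rightarrow> real vec) \<Rightarrow> nat \<Rightarrow> kf_dout" where
  "kf_dout p d y k = kf_dstep p d y k (kf_filt p y k) (kf_dfilt p d y k)"

definition mat_pderiv :: "(('p \<Rightarrow> real) \<Rightarrow> real mat) \<Rightarrow> ('p \<Rightarrow> real) \<Rightarrow> 'p \<Rightarrow> real mat \<Rightarrow> bool" where
  "mat_pderiv F \<theta> i G \<longleftrightarrow> G \<in> carrier_mat (dim_row (F \<theta>)) (dim_col (F \<theta>)) \<and>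
     (\<forall>r<dim_row (F \<theta>). \<forall>c<dim_col (F \<theta>).
        ((\<lambda>x. F (\<theta>(i := x)) $$ (r,c)) has_real_derivative G $$ (r,c)) (at (\<theta> i)))"

definition vec_pderiv :: "(('p \<Rightarrow> real) \<Rightarrow> real vec) \<Rightarrow> ('p \<Rightarrow> real) \<Rightarrow> 'p \<Rightarrow> real vec \<Rightarrow> bool" where
  "vec_pderiv F \<theta> i g \<longleftrightarrow> g \<in> carrier_vec (dim_vec (F \<theta>)) \<and>
     (\<forall>r<dim_vec (F \<theta>). ((\<lambda>x. F (\<theta>(i := x)) $ r) has_real_derivative g $ r) (at (\<theta> i)))"

definition mat_pdiff :: "(('p \<Rightarrow> real) \<Rightarrow> real mat) \<Rightarrow> ('p \<Rightarrow> real) \<Rightarrow> 'p \<Rightarrow> bool" where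
  "mat_pdiff F \<theta> i \<longleftrightarrow> (\<exists>G. mat_pderiv F \<theta> i G)"

definition vec_pdiff :: "(('p \<Rightarrow> real) \<Rightarrow> real vec) \<Rightarrow> ('p \<Rightarrow> real) \<Rightarrow> 'p \<Rightarrow> bool" where
  "vec_pdiff F \<theta> i \<longleftrightarrow> (\<exists>g. vec_pderiv F \<theta> i g)"

definition kf_out_pdiff :: "(('p \<Rightarrow> real) \<Rightarrow> kf_out) \<Rightarrow> ('p \<Rightarrow> real) \<Rightarrow> 'p \<Rightarrow> bool" where
  "kf_out_pdiff F \<theta> i \<longleftrightarrow>
     vec_pdiff (\<lambda>t. o_apred (F t)) \<theta> i \<and> mat_pdiff (\<lambda>t. o_W1 (F t)) \<theta> i \<and>
     mat_pdiff (\<lambda>t. o_UPp (F t)) \<theta> i \<and> mat_pdiff (\<lambda>t. o_DPp (F t)) \<theta> i \<and>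
     mat_pdiff (\<lambda>t. o_W2 (F t)) \<theta> i \<and> mat_pdiff (\<lambda>t. o_UPu (F t)) \<theta> i \<and>
     mat_pdiff (\<lambda>t. o_DPu (F t)) \<theta> i \<and> mat_pdiff (\<lambda>t. o_URe (F t)) \<theta> i \<and>
     mat_pdiff (\<lambda>t. o_DRe (F t)) \<theta> i \<and> mat_pdiff (\<lambda>t. o_K (F t)) \<theta> i \<and>
     vec_pdiff (\<lambda>t. o_e (F t)) \<theta> i \<and> vec_pdiff (\<lambda>t. o_eb (F t)) \<theta> i \<and>
     vec_pdiff (\<lambda>t. o_aupd (F t)) \<theta> i"

definition par_pderiv :: "(('p \<Rightarrow> real) \<Rightarrow> kf_par) \<Rightarrow> ('p \<Rightarrow> real) \<Rightarrow> 'p \<Rightarrow> kf_par \<Rightarrow> bool" where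
  "par_pderiv P \<theta> i d \<longleftrightarrow>
     mat_pderiv (\<lambda>t. pT (P t)) \<theta> i (pT d) \<and> mat_pderiv (\<lambda>t. pB (P t)) \<theta> i (pB d) \<and>
     mat_pderiv (\<lambda>t. pZ (P t)) \<theta> i (pZ d) \<and> mat_pderiv (\<lambda>t. pbeta (P t)) \<theta> i (pbeta d) \<and>
     mat_pderiv (\<lambda>t. pQ (P t)) \<theta> i (pQ d) \<and> mat_pderiv (\<lambda>t. pS (P t)) \<theta> i (pS d) \<and>
     mat_pderiv (\<lambda>t. pH (P t)) \<theta> i (pH d) \<and> vec_pderiv (\<lambda>t. pa0 (P t)) \<theta> i (pa0 d) \<and>
     mat_pderiv (\<lambda>t. pPi0 (P t)) \<theta> i (pPi0 d) \<and>
     mat_pderiv (\<lambda>t. pUPi (P t)) \<theta> i (pUPi d) \<and> mat_pderiv (\<lambda>t. pDPi (P t)) \<theta> i (pDPi d) \<and>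
     mat_pderiv (\<lambda>t. pUH (P t)) \<theta> i (pUH d) \<and> mat_pderiv (\<lambda>t. pDH (P t)) \<theta> i (pDH d) \<and>
     mat_pderiv (\<lambda>t. pUQ (P t)) \<theta> i (pUQ d) \<and> mat_pderiv (\<lambda>t. pDQ (P t)) \<theta> i (pDQ d)"

definition model_ok :: "nat \<Rightarrow> nat \<Rightarrow> kf_par \<Rightarrow> bool" where
  "model_ok n m p \<longleftrightarrow>
     pT p \<in> carrier_mat n n \<and> pB p \<in> carrier_mat n m \<and> pZ p \<in> carrier_mat m n \<and>
     pbeta p \<in> carrier_mat m m \<and> pQ p \<in> carrier_mat n n \<and> pS p \<in> carrier_mat n m \<and>
     pH p \<in> carrier_mat m m \<and> pa0 p \<in> carrier_vec n \<and> pPi0 p \<in> carrier_mat n n \<and>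
     pos_semidef (four_block_mat (pQ p) (pS p) (pS p)\<^sup>T (pH p)) \<and>
     pos_def (pPi0 p) \<and> pos_def (pH p) \<and>
     ud_fact (pPi0 p) (pUPi p) (pDPi p) \<and> ud_fact (pH p) (pUH p) (pDH p) \<and>
     ud_fact (Qbar p) (pUQ p) (pDQ p)"

end

theory Submission
  imports Defs "Jordan_Normal_Form.Determinant"
begin

(* The MWGS identities give A^T D_A A = R D_R R^T for every parameter value. Differentiating
   and conjugating with R^-1 yields M0^T + M2 + M0 = X D_R + dD_R + D_R X^T with X = R^-1 dR.
   As R is unit upper triangular, X is strictly upper triangular, and dD_R is diagonal; hence
   X D_R is the strictly upper part and dD_R the diagonal of the left-hand side, which is what
   the Diff. UD scheme computes, and dR = R X. Every other formula of Algorithm 2b is the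
   product rule applied to Algorithm 2a, with d(H^-1) = -H^-1 dH H^-1, so an induction on k
   carries the derivatives of the filter state through the steps. *)

section \<open>Derivatives of matrix-valued functions of one real variable\<close>

definition has_mat_deriv :: "(real \<Rightarrow> real mat) \<Rightarrow> real mat \<Rightarrow> nat \<Rightarrow> nat \<Rightarrow> real \<Rightarrow> bool" where
  "has_mat_deriv F F' nr nc x0 \<longleftrightarrow> (\<forall>x. F x \<in> carrier_mat nr nc) \<and> F' \<in> carrier_mat nr nc \<and>
     (\<forall>r<nr. \<forall>c<nc. ((\<lambda>x. F x $$ (r,c)) has_real_derivative F' $$ (r,c)) (at x0))"

definition has_vec_deriv :: "(real \<Rightarrow> real vec) \<Rightarrow> real vec \<Rightarrow> nat \<Rightarrow> real \<Rightarrow> bool" where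
  "has_vec_deriv F F' n x0 \<longleftrightarrow> (\<forall>x. F x \<in> carrier_vec n) \<and> F' \<in> carrier_vec n \<and>
     (\<forall>r<n. ((\<lambda>x. F x $ r) has_real_derivative F' $ r) (at x0))"

lemma has_mat_deriv_carrier:
  assumes "has_mat_deriv F F' nr nc x0"
  shows "F x \<in> carrier_mat nr nc" "F' \<in> carrier_mat nr nc"
  using assms by (auto simp: has_mat_deriv_def)

lemma has_vec_deriv_carrier:
  assumes "has_vec_deriv F F' n x0"
  shows "F x \<in> carrier_vec n" "F' \<in> carrier_vec n"
  using assms by (auto simp: has_vec_deriv_def)

lemma has_mat_deriv_unique:
  "has_mat_deriv F F1 nr nc x0 \<Longrightarrow> has_mat_deriv F F2 nr nc x0 \<Longrightarrow> F1 = F2"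
  unfolding has_mat_deriv_def by (auto intro!: eq_matI DERIV_unique)

lemma has_mat_deriv_const: "C \<in> carrier_mat nr nc \<Longrightarrow> has_mat_deriv (\<lambda>x. C) (0\<^sub>m nr nc) nr nc x0"
  unfolding has_mat_deriv_def by auto

lemma has_vec_deriv_const: "v \<in> carrier_vec n \<Longrightarrow> has_vec_deriv (\<lambda>x. v) (0\<^sub>v n) n x0"
  unfolding has_vec_deriv_def by auto

lemma has_mat_deriv_diff:
  "has_mat_deriv F F' nr nc x0 \<Longrightarrow> has_mat_deriv G G' nr nc x0 \<Longrightarrow>
   has_mat_deriv (\<lambda>x. F x - G x) (F' - G') nr nc x0"
  unfolding has_mat_deriv_def carrier_mat_def by (auto intro!: derivative_eq_intros)

lemma has_vec_deriv_add:
  "has_vec_deriv F F' n x0 \<Longrightarrow> has_vec_deriv G G' n x0 \<Longrightarrow>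
   has_vec_deriv (\<lambda>x. F x + G x) (F' + G') n x0"
  unfolding has_vec_deriv_def carrier_vec_def by (auto intro!: derivative_eq_intros)

lemma has_vec_deriv_diff:
  "has_vec_deriv F F' n x0 \<Longrightarrow> has_vec_deriv G G' n x0 \<Longrightarrow>
   has_vec_deriv (\<lambda>x. F x - G x) (F' - G') n x0"
  unfolding has_vec_deriv_def carrier_vec_def by (auto intro!: derivative_eq_intros)

lemma has_mat_deriv_transpose:
  "has_mat_deriv F F' nr nc x0 \<Longrightarrow> has_mat_deriv (\<lambda>x. (F x)\<^sup>T) F'\<^sup>T nc nr x0"
  unfolding has_mat_deriv_def carrier_mat_def by auto

lemma has_mat_deriv_mult:
  assumes "has_mat_deriv F F' nr k x0" "has_mat_deriv G G' k nc x0"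
  shows "has_mat_deriv (\<lambda>x. F x * G x) (F' * G x0 + F x0 * G') nr nc x0"
proof -
  have "((\<lambda>x. \<Sum>j<k. F x $$ (r,j) * G x $$ (j,c)) has_real_derivative
      (\<Sum>j<k. F' $$ (r,j) * G x0 $$ (j,c) + F x0 $$ (r,j) * G' $$ (j,c))) (at x0)"
    if "r < nr" "c < nc" for r c
    using assms that unfolding has_mat_deriv_def by (auto intro!: DERIV_sum derivative_eq_intros)
  then show ?thesis
    using assms unfolding has_mat_deriv_def carrier_mat_def
    by (auto simp: scalar_prod_def lessThan_atLeast0 sum.distrib)
qed

lemma has_vec_deriv_mult_mat_vec:
  assumes "has_mat_deriv F F' nr k x0" "has_vec_deriv v v' k x0"
  shows "has_vec_deriv (\<lambda>x. F x *\<^sub>v v x) (F' *\<^sub>v v x0 + F x0 *\<^sub>v v') nr x0"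
proof -
  have "((\<lambda>x. \<Sum>j<k. F x $$ (r,j) * v x $ j) has_real_derivative
      (\<Sum>j<k. F' $$ (r,j) * v x0 $ j + F x0 $$ (r,j) * v' $ j)) (at x0)"
    if "r < nr" for r
    using assms that unfolding has_mat_deriv_def has_vec_deriv_def
    by (auto intro!: DERIV_sum derivative_eq_intros)
  then show ?thesis
    using assms unfolding has_mat_deriv_def has_vec_deriv_def carrier_mat_def carrier_vec_def
    by (auto simp: scalar_prod_def lessThan_atLeast0 sum.distrib)
qed

lemma has_vec_deriv_mult_mat_vec_const:
  assumes "has_mat_deriv F F' nr k x0" "v \<in> carrier_vec k"
  shows "has_vec_deriv (\<lambda>x. F x *\<^sub>v v) (F' *\<^sub>v v) nr x0"
proof -
  have "((\<lambda>x. \<Sum>j<k. F x $$ (r,j) * v $ j) has_real_derivative (\<Sum>j<k. F' $$ (r,j) * v $ j)) (at x0)"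
    if "r < nr" for r
    using assms that unfolding has_mat_deriv_def by (auto intro!: DERIV_sum derivative_eq_intros)
  then show ?thesis
    using assms unfolding has_mat_deriv_def has_vec_deriv_def carrier_mat_def carrier_vec_def
    by (auto simp: scalar_prod_def lessThan_atLeast0)
qed

lemma has_mat_deriv_four_block:
  assumes "has_mat_deriv A A' n1 m1 x0" "has_mat_deriv B B' n1 m2 x0"
    and "has_mat_deriv C C' n2 m1 x0" "has_mat_deriv D D' n2 m2 x0"
  shows "has_mat_deriv (\<lambda>x. four_block_mat (A x) (B x) (C x) (D x)) (four_block_mat A' B' C' D')
           (n1 + n2) (m1 + m2) x0"
  unfolding has_mat_deriv_def
proof (intro conjI allI impI)
  fix r c assume "r < n1 + n2" "c < m1 + m2"
  with assms show "((\<lambda>x. four_block_mat (A x) (B x) (C x) (D x) $$ (r,c)) has_real_derivative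
      four_block_mat A' B' C' D' $$ (r,c)) (at x0)"
    unfolding has_mat_deriv_def carrier_mat_def by (cases "r < n1"; cases "c < m1") auto
qed (use assms in \<open>auto simp: has_mat_deriv_def\<close>)

lemma has_mat_deriv_bdiag:
  assumes "has_mat_deriv A A' a a x0" "has_mat_deriv B B' b b x0"
  shows "has_mat_deriv (\<lambda>x. bdiag (A x) (B x)) (bdiag A' B') (a + b) (a + b) x0"
proof -
  have "has_mat_deriv (\<lambda>x. four_block_mat (A x) (0\<^sub>m a b) (0\<^sub>m b a) (B x))
      (four_block_mat A' (0\<^sub>m a b) (0\<^sub>m b a) B') (a + b) (a + b) x0"
    by (intro has_mat_deriv_four_block assms has_mat_deriv_const) auto
  then show ?thesis
    using carrier_matD[OF has_mat_deriv_carrier(1)[OF assms(1)]] carrier_matD[OF has_mat_deriv_carrier(1)[OF assms(2)]]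
      carrier_matD[OF has_mat_deriv_carrier(2)[OF assms(1)]] carrier_matD[OF has_mat_deriv_carrier(2)[OF assms(2)]]
    by (simp add: bdiag_def)
qed

lemma has_mat_deriv_const_entry:
  assumes "has_mat_deriv F F' nr nc x0" "r < nr" "c < nc" "\<And>x. F x $$ (r,c) = a"
  shows "F' $$ (r,c) = 0"
proof -
  have "((\<lambda>x. F x $$ (r,c)) has_real_derivative F' $$ (r,c)) (at x0)"
    using assms(1-3) unfolding has_mat_deriv_def by blast
  then have "((\<lambda>x. a) has_real_derivative F' $$ (r,c)) (at x0)"
    by (simp add: assms(4))
  then show ?thesis
    using DERIV_const DERIV_unique by blast
qed

definition mat_differentiable_at :: "(real \<Rightarrow> real mat) \<Rightarrow> real \<Rightarrow> bool" where
  "mat_differentiable_at F x0 \<longleftrightarrow>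
     (\<forall>r<dim_row (F x0). \<forall>c<dim_col (F x0). (\<lambda>x. F x $$ (r,c)) differentiable (at x0))"

lemma has_mat_deriv_exists:
  assumes "\<And>x. F x \<in> carrier_mat nr nc" "mat_differentiable_at F x0"
  shows "\<exists>F'. has_mat_deriv F F' nr nc x0"
proof
  show "has_mat_deriv F (mat nr nc (\<lambda>rc. SOME D. ((\<lambda>x. F x $$ rc) has_real_derivative D) (at x0))) nr nc x0"
    using assms carrier_matD[OF assms(1)]
    by (auto intro: someI_ex simp: has_mat_deriv_def mat_differentiable_at_def real_differentiable_def)
qed

lemma differentiable_prod_at:
  fixes f :: "'a \<Rightarrow> real \<Rightarrow> real"
  assumes "finite S" "\<And>a. a \<in> S \<Longrightarrow> f a differentiable (at x0)"
  shows "(\<lambda>x. \<Prod>a\<in>S. f a x) differentiable (at x0)"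
  using assms by (induction S rule: finite_induct) auto

lemma det_differentiable:
  fixes M :: "real \<Rightarrow> real mat"
  assumes "\<And>x. M x \<in> carrier_mat k k"
    and "\<And>r c. r < k \<Longrightarrow> c < k \<Longrightarrow> (\<lambda>x. M x $$ (r,c)) differentiable (at x0)"
  shows "(\<lambda>x. det (M x)) differentiable (at x0)"
proof -
  have "(\<lambda>x. signof p * (\<Prod>i = 0..<k. M x $$ (i, p i))) differentiable (at x0)"
    if "p permutes {0..<k}" for p
  proof -
    have "(\<lambda>x. \<Prod>i = 0..<k. M x $$ (i, p i)) differentiable (at x0)"
      by (intro differentiable_prod_at assms(2)) (auto simp: permutes_in_image[OF that, simplified])
    then show ?thesis by simp
  qed
  then show ?thesis
    unfolding det_def'[OF assms(1)] by (auto intro!: differentiable_sum simp: finite_permutations)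
qed

lemma adj_mat_inverse:
  fixes A :: "real mat"
  assumes A: "A \<in> carrier_mat n n" and "det A \<noteq> 0"
  shows "A * ((1 / det A) \<cdot>\<^sub>m adj_mat A) = 1\<^sub>m n" "((1 / det A) \<cdot>\<^sub>m adj_mat A) * A = 1\<^sub>m n"
  using adj_mat[OF A] assms
  by (auto simp: mult_smult_distrib[OF A] mult_smult_assoc_mat[OF _ A] intro!: eq_matI)

lemma minv_eq_adj:
  fixes A :: "real mat"
  assumes A: "A \<in> carrier_mat n n" and d: "det A \<noteq> 0"
  shows "minv A = (1 / det A) \<cdot>\<^sub>m adj_mat A"
proof -
  define B where "B = (1 / det A) \<cdot>\<^sub>m adj_mat A"
  have B: "B \<in> carrier_mat n n" and AB: "A * B = 1\<^sub>m n" and BA: "B * A = 1\<^sub>m n"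
    using adj_mat(1)[OF A] adj_mat_inverse[OF A d] by (simp_all add: B_def)
  then have "\<exists>B. B \<in> carrier_mat (dim_col A) (dim_row A) \<and> inverts_mat A B \<and> inverts_mat B A"
    using A by (auto simp: inverts_mat_def)
  then have M: "minv A \<in> carrier_mat n n" "minv A * A = 1\<^sub>m n"
    unfolding minv_def inverts_mat_def by (rule someI2_ex; use A in auto)+
  have "minv A = minv A * (A * B)"
    using M AB by simp
  also have "\<dots> = (minv A * A) * B"
    using M(1) A B by (rule assoc_mult_mat[symmetric])
  also have "\<dots> = B"
    using M B by simp
  finally show ?thesis
    unfolding B_def .
qed

lemma minv_mat:
  fixes A :: "real mat"
  assumes A: "A \<in> carrier_mat n n" and d: "det A \<noteq> 0"
  shows "minv A \<in> carrier_mat n n" "A * minv A = 1\<^sub>m n" "minv A * A = 1\<^sub>m n"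
  using adj_mat(1)[OF A] adj_mat_inverse[OF A d] by (simp_all add: minv_eq_adj[OF A d])

(* Differentiability of the inverse comes from Cramer's rule, the formula from differentiating
   F * minv F = 1. *)
lemma mat_differentiable_minv:
  assumes F: "has_mat_deriv F F' n n x0" and d: "\<And>x. det (F x) \<noteq> 0"
  shows "mat_differentiable_at (\<lambda>x. minv (F x)) x0"
proof -
  note cF = has_mat_deriv_carrier(1)[OF F]
  have entry: "(\<lambda>x. F x $$ (r,c)) differentiable (at x0)" if "r < n" "c < n" for r c
    using F that by (auto simp: has_mat_deriv_def real_differentiable_def)
  have "(\<lambda>x. minv (F x) $$ (r,c)) differentiable (at x0)" if "r < n" "c < n" for r c
  proof -
    have "(\<lambda>x. det (mat_delete (F x) c r)) differentiable (at x0)"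
    proof (rule det_differentiable[OF mat_delete_carrier[OF cF]])
      fix i j assume ij: "i < n - 1" "j < n - 1"
      have "(\<lambda>x. mat_delete (F x) c r $$ (i,j)) =
          (\<lambda>x. F x $$ (if i < c then i else Suc i, if j < r then j else Suc j))"
        using ij by (simp add: mat_delete_def carrier_matD[OF cF])
      then show "(\<lambda>x. mat_delete (F x) c r $$ (i,j)) differentiable (at x0)"
        using ij by (auto intro: entry)
    qed
    moreover have "(\<lambda>x. det (F x)) differentiable (at x0)"
      by (rule det_differentiable[OF cF entry])
    moreover have "(\<lambda>x. minv (F x) $$ (r,c)) =
        (\<lambda>x. 1 / det (F x) * ((-1) ^ (c + r) * det (mat_delete (F x) c r)))"
      using that by (simp add: minv_eq_adj[OF cF d] adj_mat_def cofactor_def carrier_matD[OF cF])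
    ultimately show ?thesis
      using d by (auto intro!: derivative_intros)
  qed
  then show ?thesis
    using minv_mat(1)[OF cF d, of x0] unfolding mat_differentiable_at_def by simp
qed

lemma has_mat_deriv_minv:
  assumes F: "has_mat_deriv F F' n n x0" and d: "\<And>x. det (F x) \<noteq> 0"
  shows "has_mat_deriv (\<lambda>x. minv (F x)) ((-1) \<cdot>\<^sub>m (minv (F x0) * F' * minv (F x0))) n n x0"
proof -
  note cF = has_mat_deriv_carrier(1)[OF F] and cF' = has_mat_deriv_carrier(2)[OF F]
  note inv = minv_mat[OF cF d]
  obtain G where G: "has_mat_deriv (\<lambda>x. minv (F x)) G n n x0"
    using has_mat_deriv_exists[of "\<lambda>x. minv (F x)", OF inv(1) mat_differentiable_minv[OF F d]] by blast
  note cG = has_mat_deriv_carrier(2)[OF G]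
  have "has_mat_deriv (\<lambda>x. 1\<^sub>m n) (F' * minv (F x0) + F x0 * G) n n x0"
    using has_mat_deriv_mult[OF F G] inv(2) by simp
  then have sum0: "F' * minv (F x0) + F x0 * G = 0\<^sub>m n n"
    by (rule has_mat_deriv_unique[OF _ has_mat_deriv_const]) simp
  have FG: "F x0 * G = (-1) \<cdot>\<^sub>m (F' * minv (F x0))"
  proof (rule eq_matI)
    fix r c assume "r < dim_row ((-1) \<cdot>\<^sub>m (F' * minv (F x0)))" "c < dim_col ((-1) \<cdot>\<^sub>m (F' * minv (F x0)))"
    with sum0 show "(F x0 * G) $$ (r,c) = ((-1) \<cdot>\<^sub>m (F' * minv (F x0))) $$ (r,c)"
      using cF[of x0] cF' cG inv(1)[of x0] by (auto dest!: arg_cong[of _ _ "\<lambda>M. M $$ (r,c)"])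
  qed (use cF[of x0] cF' cG inv(1)[of x0] in auto)
  have "G = (minv (F x0) * F x0) * G"
    using cG inv(3)[of x0] by simp
  also have "\<dots> = minv (F x0) * (F x0 * G)"
    using inv(1)[of x0] cF[of x0] cG by (rule assoc_mult_mat)
  also have "\<dots> = (-1) \<cdot>\<^sub>m (minv (F x0) * F' * minv (F x0))"
    unfolding FG using cF' inv(1)[of x0]
    by (simp add: mult_smult_distrib[of _ n n _ n] assoc_mult_mat[of _ n n _ n _ n])
  finally show ?thesis
    using G by simp
qed

section \<open>Matrix identities and triangular matrices\<close>

(* Variants with dimension equations as premises, which simp can discharge. *)
lemma assoc_mult_mat_dim:
  "dim_col A = dim_row B \<Longrightarrow> dim_col B = dim_row C \<Longrightarrow> (A::real mat) * B * C = A * (B * C)"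
  by (rule assoc_mult_mat[of A "dim_row A" "dim_col A" B "dim_col B" C "dim_col C"]) auto

lemma add_mult_distrib_mat_dim:
  "dim_row A = dim_row B \<Longrightarrow> dim_col A = dim_col B \<Longrightarrow> dim_col A = dim_row C \<Longrightarrow>
   ((A::real mat) + B) * C = A * C + B * C"
  by (rule add_mult_distrib_mat[of A "dim_row A" "dim_col A"]) auto

lemma mult_add_distrib_mat_dim:
  "dim_col A = dim_row B \<Longrightarrow> dim_row B = dim_row C \<Longrightarrow> dim_col B = dim_col C \<Longrightarrow>
   (A::real mat) * (B + C) = A * B + A * C"
  by (rule mult_add_distrib_mat[of A "dim_row A" "dim_col A"]) auto

lemma transpose_mult_dim: "dim_col A = dim_row B \<Longrightarrow> ((A::real mat) * B)\<^sup>T = B\<^sup>T * A\<^sup>T"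
  by (rule transpose_mult[of A "dim_row A" "dim_col A" B "dim_col B"]) auto

lemmas mat_dim_simps = assoc_mult_mat_dim add_mult_distrib_mat_dim mult_add_distrib_mat_dim transpose_mult_dim

lemma split_block_four_block:
  assumes "A \<in> carrier_mat n1 m1" "B \<in> carrier_mat n1 m2" "C \<in> carrier_mat n2 m1" "D \<in> carrier_mat n2 m2"
  shows "split_block (four_block_mat A B C D) n1 m1 = (A, B, C, D)"
  using assms unfolding split_block_def Let_def by (auto intro!: eq_matI)

lemma add_neg_smult_mult_mat_vec:
  assumes "A \<in> carrier_mat nr nc" "B \<in> carrier_mat nr nc" "v \<in> carrier_vec nc"
  shows "(A + (-1) \<cdot>\<^sub>m B) *\<^sub>v v = A *\<^sub>v v - B *\<^sub>v (v :: real vec)"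
  using assms by (intro eq_vecI) (auto simp: scalar_prod_def sum_subtractf sum_negf algebra_simps)

lemma index_mult_diagonal_right:
  assumes "D \<in> carrier_mat s s" "diagonal_mat D" "X \<in> carrier_mat q s" "r < q" "c < s"
  shows "(X * D) $$ (r,c) = X $$ (r,c) * (D::real mat) $$ (c,c)"
proof -
  have "(X * D) $$ (r,c) = (\<Sum>j\<in>{0..<s}. X $$ (r,j) * D $$ (j,c))"
    using assms by (simp add: scalar_prod_def)
  also have "\<dots> = (\<Sum>j\<in>{0..<s}. if j = c then X $$ (r,c) * D $$ (c,c) else 0)"
    using assms by (intro sum.cong) (auto simp: diagonal_mat_def)
  finally show ?thesis
    using assms(5) by simp
qed

lemma index_mult_diagonal_left:
  assumes "D \<in> carrier_mat s s" "diagonal_mat D" "X \<in> carrier_mat s q" "r < s" "c < q"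
  shows "(D * X) $$ (r,c) = (D::real mat) $$ (r,r) * X $$ (r,c)"
proof -
  have "(D * X) $$ (r,c) = (\<Sum>j\<in>{0..<s}. D $$ (r,j) * X $$ (j,c))"
    using assms by (simp add: scalar_prod_def)
  also have "\<dots> = (\<Sum>j\<in>{0..<s}. if j = r then D $$ (r,r) * X $$ (r,c) else 0)"
    using assms by (intro sum.cong) (auto simp: diagonal_mat_def)
  finally show ?thesis
    using assms(4) by simp
qed

lemma diagonal_mat_transpose: "D \<in> carrier_mat s s \<Longrightarrow> diagonal_mat D \<Longrightarrow> D\<^sup>T = D"
  by (rule eq_matI) (auto simp: diagonal_mat_def, metis)

lemma det_unit_upper:
  assumes "R \<in> carrier_mat s s" "unit_upper R"
  shows "det (R::real mat) = 1"
proof -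
  have "det R = prod_list (diag_mat R)"
    using assms by (intro det_upper_triangular) (auto simp: unit_upper_def)
  also have "diag_mat R = replicate s 1"
    using assms by (auto simp: diag_mat_def unit_upper_def intro!: replicate_eqI)
  finally show ?thesis
    by simp
qed

lemma det_diagonal_nonzero:
  assumes "E \<in> carrier_mat s s" "diagonal_mat E" "\<And>j. j < s \<Longrightarrow> E $$ (j,j) \<noteq> 0"
  shows "det (E::real mat) \<noteq> 0"
proof -
  have "det E = prod_list (diag_mat E)"
    using assms by (intro det_upper_triangular) (auto simp: diagonal_mat_def)
  moreover have "0 \<notin> set (diag_mat E)"
    using assms by (auto simp: diag_mat_def)
  ultimately show ?thesis
    by (simp add: prod_list_zero_iff)
qed

definition strict_upper_triangular :: "'a::zero mat \<Rightarrow> bool" where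
  "strict_upper_triangular X \<longleftrightarrow> (\<forall>i<dim_row X. \<forall>j<dim_col X. j \<le> i \<longrightarrow> X $$ (i,j) = 0)"

lemma strict_upper_triangular_unit_upper_mult:
  fixes R X :: "real mat"
  assumes R: "R \<in> carrier_mat s s" "unit_upper R" and X: "X \<in> carrier_mat s s"
    and RX: "strict_upper_triangular (R * X)"
  shows "strict_upper_triangular X"
proof -
  have "X $$ (i,j) = 0" if "i < s" "j \<le> i" for i j
    using that
  proof (induction "s - i" arbitrary: i rule: less_induct)
    case less
    have "(R * X) $$ (i,j) = (\<Sum>k\<in>{0..<s}. R $$ (i,k) * X $$ (k,j))"
      using less.prems R X by (simp add: scalar_prod_def)
    also have "\<dots> = (\<Sum>k\<in>{0..<s}. if k = i then X $$ (i,j) else 0)"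
    proof (rule sum.cong)
      fix k assume "k \<in> {0..<s}"
      moreover have "X $$ (k,j) = 0" if "i < k" "k < s"
        using less that by (intro less.hyps) auto
      ultimately show "R $$ (i,k) * X $$ (k,j) = (if k = i then X $$ (i,j) else 0)"
        using R less.prems by (cases k i rule: linorder_cases) (auto simp: unit_upper_def upper_triangular_def)
    qed simp
    finally show ?case
      using RX R X less.prems by (simp add: strict_upper_triangular_def)
  qed
  then show ?thesis
    using X by (simp add: strict_upper_triangular_def)
qed

lemma has_mat_deriv_unit_upper:
  assumes "has_mat_deriv R R' s s x0" "\<And>x. unit_upper (R x)"
  shows "strict_upper_triangular R'"
  unfolding strict_upper_triangular_def
proof (intro allI impI)
  fix i j assume "i < dim_row R'" "j < dim_col R'" "j \<le> i"
  moreover have "R x $$ (i,j) = (if i = j then 1 else 0)" if "i < s" "j \<le> i" for x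
    using assms(2)[of x] has_mat_deriv_carrier(1)[OF assms(1), of x] that
    by (auto simp: unit_upper_def upper_triangular_def)
  ultimately show "R' $$ (i,j) = 0"
    using has_mat_deriv_carrier(2)[OF assms(1)] by (intro has_mat_deriv_const_entry[OF assms(1)]) auto
qed

lemma has_mat_deriv_diagonal:
  assumes "has_mat_deriv E E' s s x0" "\<And>x. diagonal_mat (E x)"
  shows "diagonal_mat E'"
  unfolding diagonal_mat_def
proof (intro allI impI)
  fix i j assume "i < dim_row E'" "j < dim_col E'" "i \<noteq> j"
  then show "E' $$ (i,j) = 0"
    using assms has_mat_deriv_carrier[OF assms(1)]
    by (intro has_mat_deriv_const_entry[OF assms(1), where a = 0])
      (auto simp: diagonal_mat_def carrier_matD[OF has_mat_deriv_carrier(1)[OF assms(1)]])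
qed

lemma recover_strict_upper_and_diag:
  fixes M0 M2 X E E' :: "real mat"
  assumes carr: "M0 \<in> carrier_mat s s" "M2 \<in> carrier_mat s s" "X \<in> carrier_mat s s"
      "E \<in> carrier_mat s s" "E' \<in> carrier_mat s s"
    and E: "diagonal_mat E" and E': "diagonal_mat E'" and X: "strict_upper_triangular X"
    and eq: "M0\<^sup>T + M2 + M0 = X * E + E' + E * X\<^sup>T"
  shows "(slow M0)\<^sup>T + supp M0 + supp M2 = X * E" "2 \<cdot>\<^sub>m sdiag M0 + sdiag M2 = E'"
proof -
  have X0: "X $$ (i,j) = 0" if "i < s" "j < s" "j \<le> i" for i j
    using X carr that by (auto simp: strict_upper_triangular_def)
  have E'0: "E' $$ (i,j) = 0" if "i < s" "j < s" "i \<noteq> j" for i j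
    using E' carr that by (auto simp: diagonal_mat_def)
  have entry: "M0 $$ (j,i) + M2 $$ (i,j) + M0 $$ (i,j) = X $$ (i,j) * E $$ (j,j) + E' $$ (i,j) + E $$ (i,i) * X $$ (j,i)"
    if ij: "i < s" "j < s" for i j
  proof -
    have "(M0\<^sup>T + M2 + M0) $$ (i,j) = (X * E + E' + E * X\<^sup>T) $$ (i,j)"
      using eq by simp
    then show ?thesis
      using carr ij index_mult_diagonal_right[OF carr(4) E carr(3) ij]
        index_mult_diagonal_left[OF carr(4) E _ ij, of "X\<^sup>T"] by simp
  qed
  show "(slow M0)\<^sup>T + supp M0 + supp M2 = X * E"
  proof (rule eq_matI)
    fix i j assume "i < dim_row (X * E)" "j < dim_col (X * E)"
    then have ij: "i < s" "j < s"
      using carr by auto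
    show "((slow M0)\<^sup>T + supp M0 + supp M2) $$ (i,j) = (X * E) $$ (i,j)"
      using entry[OF ij] X0[OF ij] X0[OF ij(2,1)] E'0[OF ij] carr ij
        index_mult_diagonal_right[OF carr(4) E carr(3) ij]
      by (cases "i < j") (auto simp: slow_def supp_def)
  qed (use carr in \<open>auto simp: slow_def supp_def\<close>)
  show "2 \<cdot>\<^sub>m sdiag M0 + sdiag M2 = E'"
  proof (rule eq_matI)
    fix i j assume "i < dim_row E'" "j < dim_col E'"
    then have ij: "i < s" "j < s"
      using carr by auto
    show "(2 \<cdot>\<^sub>m sdiag M0 + sdiag M2) $$ (i,j) = E' $$ (i,j)"
      using entry[OF ij] X0[OF ij] E'0[OF ij] carr ij by (cases "i = j") (auto simp: sdiag_def)
  qed (use carr in \<open>auto simp: sdiag_def\<close>)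
qed

section \<open>Correctness of the Diff. UD scheme\<close>

definition mwgs_R :: "real mat \<Rightarrow> real mat \<Rightarrow> real mat" where
  "mwgs_R A DA = fst (snd (mwgs A DA))"

definition mwgs_DR :: "real mat \<Rightarrow> real mat \<Rightarrow> real mat" where
  "mwgs_DR A DA = snd (snd (mwgs A DA))"

lemma mwgs_spec_mwgs:
  assumes "mwgs_ok A DA"
  shows "mwgs_spec A DA (fst (mwgs A DA)) (mwgs_R A DA) (mwgs_DR A DA)"
    "\<And>j. j < dim_col A \<Longrightarrow> mwgs_DR A DA $$ (j,j) \<noteq> 0"
proof -
  obtain W R DR where "mwgs_spec A DA W R DR \<and> (\<forall>j<dim_col A. DR $$ (j,j) \<noteq> 0)"
    using assms unfolding mwgs_ok_def by blast
  then have "\<exists>WRD. (\<lambda>(W,R,DR). mwgs_spec A DA W R DR \<and> (\<forall>j<dim_col A. DR $$ (j,j) \<noteq> 0)) WRD"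
    by (intro exI[of _ "(W,R,DR)"]) simp
  then have "(\<lambda>(W,R,DR). mwgs_spec A DA W R DR \<and> (\<forall>j<dim_col A. DR $$ (j,j) \<noteq> 0)) (mwgs A DA)"
    unfolding mwgs_def by (rule someI_ex)
  then show "mwgs_spec A DA (fst (mwgs A DA)) (mwgs_R A DA) (mwgs_DR A DA)"
    "\<And>j. j < dim_col A \<Longrightarrow> mwgs_DR A DA $$ (j,j) \<noteq> 0"
    by (auto simp: mwgs_R_def mwgs_DR_def split: prod.splits)
qed

lemma mwgs_spec_pre_array:
  assumes "mwgs_spec A DA W R DR"
  shows "A = W * R\<^sup>T"
proof -
  have "A\<^sup>T = R * W\<^sup>T" "dim_col R = dim_row W\<^sup>T"
    using assms by (auto simp: mwgs_spec_def Let_def)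
  then show ?thesis
    by (metis transpose_mult_dim transpose_transpose)
qed

lemma mwgs_spec_gram:
  assumes "mwgs_spec A DA W R DR"
  shows "A\<^sup>T * DA * A = R * DR * R\<^sup>T"
proof -
  obtain r s where carr: "W \<in> carrier_mat r s" "R \<in> carrier_mat s s" "DA \<in> carrier_mat r r"
    and WDW: "W\<^sup>T * DA * W = DR"
    using assms by (auto simp: mwgs_spec_def Let_def)
  note dims = carr[THEN carrier_matD(1)] carr[THEN carrier_matD(2)]
  have "A\<^sup>T * DA * A = R * (W\<^sup>T * DA * W) * R\<^sup>T"
    unfolding mwgs_spec_pre_array[OF assms] by (simp add: dims assoc_mult_mat_dim transpose_mult_dim)
  then show ?thesis
    unfolding WDW .
qed

lemma congruence_gram_deriv_lhs:
  fixes A W dA D dD R Ri :: "real mat"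
  assumes carr: "A \<in> carrier_mat r s" "W \<in> carrier_mat r s" "dA \<in> carrier_mat r s"
      "D \<in> carrier_mat r r" "dD \<in> carrier_mat r r" "R \<in> carrier_mat s s" "Ri \<in> carrier_mat s s"
    and A: "A = W * R\<^sup>T" and Ri: "Ri * R = 1\<^sub>m s" and D: "D\<^sup>T = D"
  shows "Ri * ((dA\<^sup>T * D + A\<^sup>T * dD) * A + (A\<^sup>T * D) * dA) * Ri\<^sup>T
    = (W\<^sup>T * D * dA * Ri\<^sup>T)\<^sup>T + W\<^sup>T * dD * W + W\<^sup>T * D * dA * Ri\<^sup>T"
proof -
  note dims = carr[THEN carrier_matD(1)] carr[THEN carrier_matD(2)]
  have ARi: "A * Ri\<^sup>T = W"
  proof -
    have "A * Ri\<^sup>T = W * (Ri * R)\<^sup>T"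
      unfolding A by (simp add: dims mat_dim_simps)
    then show ?thesis
      using Ri by (simp add: dims)
  qed
  have RiA: "Ri * (A\<^sup>T * Z) = W\<^sup>T * Z" if "dim_row Z = r" for Z
  proof -
    have "Ri * (A\<^sup>T * Z) = (Ri * R) * (W\<^sup>T * Z)"
      unfolding A using that by (simp add: dims mat_dim_simps)
    then show ?thesis
      using Ri that by (simp add: dims)
  qed
  have "Ri * ((dA\<^sup>T * D + A\<^sup>T * dD) * A + (A\<^sup>T * D) * dA) * Ri\<^sup>T
      = Ri * (dA\<^sup>T * D * A) * Ri\<^sup>T + Ri * (A\<^sup>T * dD * A) * Ri\<^sup>T + Ri * (A\<^sup>T * D * dA) * Ri\<^sup>T"
    by (simp add: dims mat_dim_simps)
  also have "Ri * (dA\<^sup>T * D * A) * Ri\<^sup>T = (W\<^sup>T * D * dA * Ri\<^sup>T)\<^sup>T"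
    by (simp add: dims assoc_mult_mat_dim transpose_mult_dim ARi D)
  also have "Ri * (A\<^sup>T * dD * A) * Ri\<^sup>T = W\<^sup>T * dD * W"
    by (simp add: dims assoc_mult_mat_dim ARi RiA)
  also have "Ri * (A\<^sup>T * D * dA) * Ri\<^sup>T = W\<^sup>T * D * dA * Ri\<^sup>T"
    by (simp add: dims assoc_mult_mat_dim RiA)
  finally show ?thesis .
qed

lemma congruence_gram_deriv_rhs:
  fixes R Ri E dR dE :: "real mat"
  assumes carr: "R \<in> carrier_mat s s" "Ri \<in> carrier_mat s s" "E \<in> carrier_mat s s"
      "dR \<in> carrier_mat s s" "dE \<in> carrier_mat s s"
    and Ri: "Ri * R = 1\<^sub>m s"
  shows "Ri * ((dR * E + R * dE) * R\<^sup>T + (R * E) * dR\<^sup>T) * Ri\<^sup>T = (Ri * dR) * E + dE + E * (Ri * dR)\<^sup>T"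
proof -
  note dims = carr[THEN carrier_matD(1)] carr[THEN carrier_matD(2)]
  have RiR: "Ri * (R * Z) = Z" if "dim_row Z = s" for Z
    using that Ri by (simp add: dims assoc_mult_mat_dim[symmetric])
  have RRi: "R\<^sup>T * (Ri\<^sup>T * Z) = Z" if "dim_row Z = s" for Z
  proof -
    have "R\<^sup>T * (Ri\<^sup>T * Z) = (Ri * R)\<^sup>T * Z"
      using that by (simp add: dims mat_dim_simps)
    then show ?thesis
      using that Ri by simp
  qed
  have "Ri * ((dR * E + R * dE) * R\<^sup>T + (R * E) * dR\<^sup>T) * Ri\<^sup>T
      = Ri * (dR * E * R\<^sup>T) * Ri\<^sup>T + Ri * (R * dE * R\<^sup>T) * Ri\<^sup>T + Ri * (R * E * dR\<^sup>T) * Ri\<^sup>T"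
    by (simp add: dims mat_dim_simps)
  also have "Ri * (dR * E * R\<^sup>T) * Ri\<^sup>T = (Ri * dR) * E"
    using RRi[of "1\<^sub>m s"] by (simp add: dims assoc_mult_mat_dim)
  also have "Ri * (R * dE * R\<^sup>T) * Ri\<^sup>T = dE"
    using RRi[of "1\<^sub>m s"] by (simp add: dims assoc_mult_mat_dim RiR)
  also have "Ri * (R * E * dR\<^sup>T) * Ri\<^sup>T = E * (Ri * dR)\<^sup>T"
    by (simp add: dims assoc_mult_mat_dim transpose_mult_dim RiR)
  finally show ?thesis .
qed

lemma congruence_gram_deriv:
  fixes A DA W R E A' DA' R' E' Ri :: "real mat"
  assumes spec: "mwgs_spec A DA W R E" and cA: "A \<in> carrier_mat r s"
    and carr: "A' \<in> carrier_mat r s" "DA' \<in> carrier_mat r r" "R' \<in> carrier_mat s s" "E' \<in> carrier_mat s s"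
    and Ri: "Ri \<in> carrier_mat s s" "Ri * R = 1\<^sub>m s"
    and gram: "(A'\<^sup>T * DA + A\<^sup>T * DA') * A + (A\<^sup>T * DA) * A' = (R' * E + R * E') * R\<^sup>T + (R * E) * R'\<^sup>T"
  shows "(W\<^sup>T * DA * A' * Ri\<^sup>T)\<^sup>T + W\<^sup>T * DA' * W + W\<^sup>T * DA * A' * Ri\<^sup>T = (Ri * R') * E + E' + E * (Ri * R')\<^sup>T"
proof -
  have cW: "W \<in> carrier_mat r s" and cR: "R \<in> carrier_mat s s" and cE: "E \<in> carrier_mat s s"
    and cD: "DA \<in> carrier_mat r r" and "diagonal_mat DA"
    using spec cA by (auto simp: mwgs_spec_def Let_def)
  then have "(W\<^sup>T * DA * A' * Ri\<^sup>T)\<^sup>T + W\<^sup>T * DA' * W + W\<^sup>T * DA * A' * Ri\<^sup>T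
      = Ri * ((A'\<^sup>T * DA + A\<^sup>T * DA') * A + (A\<^sup>T * DA) * A') * Ri\<^sup>T"
    using congruence_gram_deriv_lhs[OF cA cW carr(1) cD carr(2) cR Ri(1) mwgs_spec_pre_array[OF spec] Ri(2)]
      diagonal_mat_transpose[OF cD] by simp
  also have "\<dots> = (Ri * R') * E + E' + E * (Ri * R')\<^sup>T"
    unfolding gram by (rule congruence_gram_deriv_rhs[OF cR Ri(1) cE carr(3,4) Ri(2)])
  finally show ?thesis .
qed

lemma diff_ud_eq_of_gram_deriv:
  fixes A DA A' DA' R' E' :: "real mat"
  defines "R \<equiv> mwgs_R A DA" and "E \<equiv> mwgs_DR A DA"
  assumes ok: "mwgs_ok A DA" and cA: "A \<in> carrier_mat r s"
    and carr: "A' \<in> carrier_mat r s" "DA' \<in> carrier_mat r r" "R' \<in> carrier_mat s s" "E' \<in> carrier_mat s s"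
    and R': "strict_upper_triangular R'" and E': "diagonal_mat E'"
    and gram: "(A'\<^sup>T * DA + A\<^sup>T * DA') * A + (A\<^sup>T * DA) * A' = (R' * E + R * E') * R\<^sup>T + (R * E) * R'\<^sup>T"
  shows "diff_ud A DA A' DA' = (R', E')"
proof -
  define W where "W = fst (mwgs A DA)"
  define Ri where "Ri = minv R"
  define M0 where "M0 = W\<^sup>T * DA * A' * Ri\<^sup>T"
  define M2 where "M2 = W\<^sup>T * DA' * W"
  define X where "X = Ri * R'"
  have spec: "mwgs_spec A DA W R E"
    unfolding W_def R_def E_def using ok by (rule mwgs_spec_mwgs)
  then have cW: "W \<in> carrier_mat r s" and cR: "R \<in> carrier_mat s s" and cE: "E \<in> carrier_mat s s"
    and cD: "DA \<in> carrier_mat r r" and unit: "unit_upper R" and diag: "diagonal_mat E"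
    using cA by (auto simp: mwgs_spec_def Let_def)
  have "det R = 1"
    using det_unit_upper[OF cR unit] .
  then have cRi: "Ri \<in> carrier_mat s s" and RRi: "R * Ri = 1\<^sub>m s" and RiR: "Ri * R = 1\<^sub>m s"
    using minv_mat[OF cR] by (simp_all add: Ri_def)
  have "det E \<noteq> 0"
    by (rule det_diagonal_nonzero[OF cE diag]) (use mwgs_spec_mwgs(2)[OF ok] cA in \<open>auto simp: E_def\<close>)
  note Einv = minv_mat[OF cE this]
  note dims = carrier_matD[OF cR] carrier_matD[OF cE] carrier_matD[OF carr(3)] carrier_matD[OF cRi]
  have sym: "M0\<^sup>T + M2 + M0 = X * E + E' + E * X\<^sup>T"
    unfolding M0_def M2_def X_def using spec cA carr cRi RiR gram by (rule congruence_gram_deriv)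
  have cX: "X \<in> carrier_mat s s"
    unfolding X_def using cRi carr(3) by simp
  have RX: "R * X = R'"
    unfolding X_def using RRi by (simp add: assoc_mult_mat_dim[symmetric] dims)
  then have X: "strict_upper_triangular X"
    using strict_upper_triangular_unit_upper_mult[OF cR unit cX] R' by simp
  have cM0: "M0 \<in> carrier_mat s s" and cM2: "M2 \<in> carrier_mat s s"
    unfolding M0_def M2_def using cW cD carr cRi by auto
  note parts = recover_strict_upper_and_diag[OF cM0 cM2 cX cE carr(4) diag E' X sym]
  have "R * (X * E) * minv E = (R * X) * (E * minv E)"
    using cX Einv(1) by (simp add: assoc_mult_mat_dim dims)
  then have "R * (X * E) * minv E = R'"
    using RX Einv(2) carr(3) by simp
  moreover have "mwgs A DA = (W, R, E)"
    by (simp add: W_def R_def E_def mwgs_R_def mwgs_DR_def)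
  ultimately show ?thesis
    by (simp add: diff_ud_def Let_def Ri_def[symmetric] M0_def[symmetric] M2_def[symmetric] parts)
qed

lemma diff_ud_correct:
  fixes A DA :: "real \<Rightarrow> real mat"
  assumes ok: "\<And>x. mwgs_ok (A x) (DA x)"
    and A: "has_mat_deriv A A' r s x0" and DA: "has_mat_deriv DA DA' r r x0"
    and R: "has_mat_deriv (\<lambda>x. mwgs_R (A x) (DA x)) R' s s x0"
    and E: "has_mat_deriv (\<lambda>x. mwgs_DR (A x) (DA x)) E' s s x0"
  shows "diff_ud (A x0) (DA x0) A' DA' = (R', E')"
proof (rule diff_ud_eq_of_gram_deriv[OF ok has_mat_deriv_carrier(1)[OF A]])
  have spec: "mwgs_spec (A x) (DA x) (fst (mwgs (A x) (DA x))) (mwgs_R (A x) (DA x)) (mwgs_DR (A x) (DA x))"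
    for x
    using ok by (rule mwgs_spec_mwgs)
  then have "unit_upper (mwgs_R (A x) (DA x))" "diagonal_mat (mwgs_DR (A x) (DA x))" for x
    by (auto simp: mwgs_spec_def Let_def)
  then show "strict_upper_triangular R'" "diagonal_mat E'"
    using has_mat_deriv_unit_upper[OF R] has_mat_deriv_diagonal[OF E] by blast+
  have "has_mat_deriv (\<lambda>x. (A x)\<^sup>T * DA x * A x)
      ((A'\<^sup>T * DA x0 + (A x0)\<^sup>T * DA') * A x0 + ((A x0)\<^sup>T * DA x0) * A') s s x0"
    by (rule has_mat_deriv_mult[OF has_mat_deriv_mult[OF has_mat_deriv_transpose[OF A] DA] A])
  moreover have "has_mat_deriv (\<lambda>x. (A x)\<^sup>T * DA x * A x)
      ((R' * mwgs_DR (A x0) (DA x0) + mwgs_R (A x0) (DA x0) * E') * (mwgs_R (A x0) (DA x0))\<^sup>T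
        + (mwgs_R (A x0) (DA x0) * mwgs_DR (A x0) (DA x0)) * R'\<^sup>T) s s x0"
    unfolding mwgs_spec_gram[OF spec]
    by (rule has_mat_deriv_mult[OF has_mat_deriv_mult[OF R E] has_mat_deriv_transpose[OF R]])
  ultimately show "(A'\<^sup>T * DA x0 + (A x0)\<^sup>T * DA') * A x0 + ((A x0)\<^sup>T * DA x0) * A'
      = (R' * mwgs_DR (A x0) (DA x0) + mwgs_R (A x0) (DA x0) * E') * (mwgs_R (A x0) (DA x0))\<^sup>T
        + (mwgs_R (A x0) (DA x0) * mwgs_DR (A x0) (DA x0)) * R'\<^sup>T"
    by (rule has_mat_deriv_unique)
qed (rule has_mat_deriv_carrier(2), fact)+

section \<open>One step of the filter\<close>

definition kf_apred :: "kf_par \<Rightarrow> (int \<Rightarrow> real vec) \<Rightarrow> nat \<Rightarrow> real vec \<Rightarrow> real vec" where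
  "kf_apred p y k a = Tbar p *\<^sub>v a + Bbar p *\<^sub>v y (int k - 1) + (pS p * Hinv p) *\<^sub>v y (int k)"

definition kf_dapred :: "kf_par \<Rightarrow> kf_par \<Rightarrow> (int \<Rightarrow> real vec) \<Rightarrow> nat \<Rightarrow> real vec \<Rightarrow> real vec \<Rightarrow> real vec" where
  "kf_dapred p d y k a da = dTbar p d *\<^sub>v a + Tbar p *\<^sub>v da + dBbar p d *\<^sub>v y (int k - 1)
     + (pS d * Hinv p) *\<^sub>v y (int k) - (pS p * Hinv p * pH d * Hinv p) *\<^sub>v y (int k)"

definition pre1_deriv :: "kf_par \<Rightarrow> kf_par \<Rightarrow> real mat \<Rightarrow> real mat \<Rightarrow> real mat" where
  "pre1_deriv p d U dU = (hcat (dTbar p d * U + Tbar p * dU) (pUQ d))\<^sup>T"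

definition pre2_deriv :: "kf_par \<Rightarrow> kf_par \<Rightarrow> real mat \<Rightarrow> real mat \<Rightarrow> real mat" where
  "pre2_deriv p d R dR =
     (four_block_mat dR (0\<^sub>m (dim_row R) (dim_col (pUH p))) (pZ d * R + pZ p * dR) (pUH d))\<^sup>T"

lemma kf_step_simps:
  fixes p y k a U D
  defines "ou \<equiv> kf_step p y k (a, U, D)"
  shows "o_apred ou = kf_apred p y k a"
    "o_UPp ou = mwgs_R (pre1 p U) (bdiag D (pDQ p))"
    "o_DPp ou = mwgs_DR (pre1 p U) (bdiag D (pDQ p))"
    "o_e ou = y (int k + 1) - pZ p *\<^sub>v o_apred ou - pbeta p *\<^sub>v y (int k)"
    "o_eb ou = minv (o_URe ou) *\<^sub>v o_e ou"
    "o_aupd ou = o_apred ou + o_K ou *\<^sub>v o_eb ou"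
  unfolding ou_def kf_step_def kf_apred_def mwgs_R_def mwgs_DR_def
  by (simp_all add: Let_def split_def)

lemma kf_step_blocks:
  fixes p y k a U D
  defines "ou \<equiv> kf_step p y k (a, U, D)"
  defines "A2 \<equiv> pre2 p (o_UPp ou)" and "DA2 \<equiv> bdiag (o_DPp ou) (pDH p)"
  assumes ok: "mwgs_ok A2 DA2" and carr: "o_UPp ou \<in> carrier_mat n n" "pUH p \<in> carrier_mat m m"
  shows "mwgs_R A2 DA2 = four_block_mat (o_UPu ou) (o_K ou) (0\<^sub>m m n) (o_URe ou)"
    "mwgs_DR A2 DA2 = four_block_mat (o_DPu ou) (0\<^sub>m n m) (0\<^sub>m m n) (o_DRe ou)"
    "o_UPu ou \<in> carrier_mat n n" "o_K ou \<in> carrier_mat n m" "o_URe ou \<in> carrier_mat m m"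
    "o_DPu ou \<in> carrier_mat n n" "o_DRe ou \<in> carrier_mat m m" "unit_upper (o_URe ou)"
proof -
  have "A2 \<in> carrier_mat (n + m) (n + m)"
    using carr unfolding A2_def pre2_def by auto
  then have R2: "mwgs_R A2 DA2 \<in> carrier_mat (n + m) (n + m)" "unit_upper (mwgs_R A2 DA2)"
    and DR2: "mwgs_DR A2 DA2 \<in> carrier_mat (n + m) (n + m)" "diagonal_mat (mwgs_DR A2 DA2)"
    using mwgs_spec_mwgs(1)[OF ok] by (auto simp: mwgs_spec_def Let_def)
  obtain C where C: "split_block (mwgs_R A2 DA2) n n = (o_UPu ou, o_K ou, C, o_URe ou)"
    using carr(1) unfolding ou_def A2_def DA2_def kf_step_def mwgs_R_def
    by (simp add: Let_def split_def) (metis prod.collapse)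
  obtain B' C' where BC': "split_block (mwgs_DR A2 DA2) n n = (o_DPu ou, B', C', o_DRe ou)"
    using carr(1) unfolding ou_def A2_def DA2_def kf_step_def mwgs_DR_def
    by (simp add: Let_def split_def) (metis prod.collapse)
  note R2_blocks = split_block[OF C, of m m] and DR2_blocks = split_block[OF BC', of m m]
  show "o_UPu ou \<in> carrier_mat n n" "o_K ou \<in> carrier_mat n m" "o_URe ou \<in> carrier_mat m m"
    "o_DPu ou \<in> carrier_mat n n" "o_DRe ou \<in> carrier_mat m m"
    using R2_blocks DR2_blocks R2 DR2 by auto
  have "C = 0\<^sub>m m n"
    using C R2 unfolding split_block_def Let_def unit_upper_def upper_triangular_def
    by (auto intro!: eq_matI)
  then show "mwgs_R A2 DA2 = four_block_mat (o_UPu ou) (o_K ou) (0\<^sub>m m n) (o_URe ou)"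
    using R2_blocks R2 by auto
  have "o_URe ou = mat m m (\<lambda>(i,j). mwgs_R A2 DA2 $$ (i + n, j + n))"
    using C R2(1) by (auto simp: split_block_def Let_def)
  then show "unit_upper (o_URe ou)"
    using R2 by (auto simp: unit_upper_def upper_triangular_def)
  have "B' = 0\<^sub>m n m" "C' = 0\<^sub>m m n"
    using BC' DR2 unfolding split_block_def Let_def diagonal_mat_def by (auto intro!: eq_matI)
  then show "mwgs_DR A2 DA2 = four_block_mat (o_DPu ou) (0\<^sub>m n m) (0\<^sub>m m n) (o_DRe ou)"
    using DR2_blocks DR2 by auto
qed

lemma kf_dstep_simps:
  fixes p d y k a U D da dU dD
  defines "ou \<equiv> kf_step p y k (a, U, D)" and "dou \<equiv> kf_dstep p d y k (a, U, D) (da, dU, dD)"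
  shows "d_apred dou = kf_dapred p d y k a da"
    "(d_UPp dou, d_DPp dou) = diff_ud (pre1 p U) (bdiag D (pDQ p)) (pre1_deriv p d U dU) (bdiag dD (pDQ d))"
    "d_eb dou = (-1) \<cdot>\<^sub>v ((minv (o_URe ou) * d_URe dou * minv (o_URe ou)) *\<^sub>v o_e ou)
      - minv (o_URe ou) *\<^sub>v (pZ d *\<^sub>v o_apred ou + pZ p *\<^sub>v d_apred dou + pbeta d *\<^sub>v y (int k))"
    "d_aupd dou = d_apred dou + d_K dou *\<^sub>v o_eb ou + o_K ou *\<^sub>v d_eb dou"
  unfolding ou_def dou_def kf_dstep_def kf_dapred_def pre1_deriv_def
  by (simp_all add: Let_def split_def kf_step_simps)

lemma kf_dstep_blocks:
  fixes p d y k a U D da dU dD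
  defines "ou \<equiv> kf_step p y k (a, U, D)" and "dou \<equiv> kf_dstep p d y k (a, U, D) (da, dU, dD)"
  assumes "diff_ud (pre2 p (o_UPp ou)) (bdiag (o_DPp ou) (pDH p))
      (pre2_deriv p d (o_UPp ou) (d_UPp dou)) (bdiag (d_DPp dou) (pDH d))
    = (four_block_mat G1 G2 G3 G4, four_block_mat G5 G6 G7 G8)"
    and "G1 \<in> carrier_mat n n" "G2 \<in> carrier_mat n m" "G3 \<in> carrier_mat m n" "G4 \<in> carrier_mat m m"
    and "G5 \<in> carrier_mat n n" "G6 \<in> carrier_mat n m" "G7 \<in> carrier_mat m n" "G8 \<in> carrier_mat m m"
    and "o_UPp ou \<in> carrier_mat n n"
  shows "d_UPu dou = G1" "d_K dou = G2" "d_URe dou = G4" "d_DPu dou = G5" "d_DRe dou = G8"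
  using assms(3-) unfolding ou_def dou_def kf_dstep_def pre2_deriv_def
  by (simp_all add: Let_def split_def split_block_four_block)

lemma pos_def_det_nonzero:
  assumes "pos_def H" "H \<in> carrier_mat m m"
  shows "det H \<noteq> 0"
proof
  assume "det H = 0"
  then obtain v where v: "v \<in> carrier_vec m" "v \<noteq> 0\<^sub>v m" "H *\<^sub>v v = 0\<^sub>v m"
    using det_0_iff_vec_prod_zero[OF assms(2)] by blast
  obtain k where "H \<in> carrier_mat k k" "\<forall>x\<in>carrier_vec k. x \<noteq> 0\<^sub>v k \<longrightarrow> x \<bullet> (H *\<^sub>v x) > 0"
    using assms(1) unfolding pos_def_def by blast
  moreover have "k = m"
    using assms(2) \<open>H \<in> carrier_mat k k\<close> by auto
  ultimately have "v \<bullet> (H *\<^sub>v v) > 0"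
    using v by auto
  then show False
    using v by simp
qed

lemma model_ok_carriers:
  assumes "model_ok n m p"
  shows "pT p \<in> carrier_mat n n" "pB p \<in> carrier_mat n m" "pZ p \<in> carrier_mat m n"
    "pbeta p \<in> carrier_mat m m" "pS p \<in> carrier_mat n m" "pH p \<in> carrier_mat m m"
    "pa0 p \<in> carrier_vec n" "det (pH p) \<noteq> 0" "Hinv p \<in> carrier_mat m m"
    "Tbar p \<in> carrier_mat n n" "Bbar p \<in> carrier_mat n m"
    "pUH p \<in> carrier_mat m m" "pDH p \<in> carrier_mat m m" "pUQ p \<in> carrier_mat n n" "pDQ p \<in> carrier_mat n n"
    "pUPi p \<in> carrier_mat n n" "pDPi p \<in> carrier_mat n n"
proof -
  note M = assms[unfolded model_ok_def]
  show "pT p \<in> carrier_mat n n" "pB p \<in> carrier_mat n m" "pZ p \<in> carrier_mat m n"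
    "pbeta p \<in> carrier_mat m m" "pS p \<in> carrier_mat n m" "pH p \<in> carrier_mat m m" "pa0 p \<in> carrier_vec n"
    using M by auto
  show "det (pH p) \<noteq> 0"
    using M pos_def_det_nonzero by blast
  then show Hi: "Hinv p \<in> carrier_mat m m"
    unfolding Hinv_def using M by (intro minv_mat) auto
  show "Tbar p \<in> carrier_mat n n" "Bbar p \<in> carrier_mat n m"
    unfolding Tbar_def Bbar_def using M Hi by auto
  have "Qbar p \<in> carrier_mat n n"
    unfolding Qbar_def using M Hi by auto
  then show "pUQ p \<in> carrier_mat n n" "pDQ p \<in> carrier_mat n n"
    "pUH p \<in> carrier_mat m m" "pDH p \<in> carrier_mat m m" "pUPi p \<in> carrier_mat n n" "pDPi p \<in> carrier_mat n n"
    using M unfolding ud_fact_def by auto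
qed

(* P x is the parameter record at theta with theta_i replaced by x, and d holds the partial
   derivatives of the parameters at x0 = theta_i. *)
locale param_curve =
  fixes P :: "real \<Rightarrow> kf_par" and d :: kf_par and x0 :: real and n m :: nat and y :: "int \<Rightarrow> real vec"
  assumes model: "\<And>x. model_ok n m (P x)" and obs: "\<And>j. y j \<in> carrier_vec m"
    and dT: "has_mat_deriv (\<lambda>x. pT (P x)) (pT d) n n x0"
    and dB: "has_mat_deriv (\<lambda>x. pB (P x)) (pB d) n m x0"
    and dZ: "has_mat_deriv (\<lambda>x. pZ (P x)) (pZ d) m n x0"
    and dbeta: "has_mat_deriv (\<lambda>x. pbeta (P x)) (pbeta d) m m x0"
    and dS: "has_mat_deriv (\<lambda>x. pS (P x)) (pS d) n m x0"
    and dH: "has_mat_deriv (\<lambda>x. pH (P x)) (pH d) m m x0"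
    and da0: "has_vec_deriv (\<lambda>x. pa0 (P x)) (pa0 d) n x0"
    and dUPi: "has_mat_deriv (\<lambda>x. pUPi (P x)) (pUPi d) n n x0"
    and dDPi: "has_mat_deriv (\<lambda>x. pDPi (P x)) (pDPi d) n n x0"
    and dUH: "has_mat_deriv (\<lambda>x. pUH (P x)) (pUH d) m m x0"
    and dDH: "has_mat_deriv (\<lambda>x. pDH (P x)) (pDH d) m m x0"
    and dUQ: "has_mat_deriv (\<lambda>x. pUQ (P x)) (pUQ d) n n x0"
    and dDQ: "has_mat_deriv (\<lambda>x. pDQ (P x)) (pDQ d) n n x0"
begin

lemmas par_carriers = model_ok_carriers[OF model]

lemmas par_dims = par_carriers(1-6,9-17)[THEN carrier_matD(1)] par_carriers(1-6,9-17)[THEN carrier_matD(2)]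

lemma Hinv_deriv: "has_mat_deriv (\<lambda>x. Hinv (P x)) (dHinv (P x0) d) m m x0"
  unfolding Hinv_def dHinv_def using dH par_carriers(8) by (rule has_mat_deriv_minv)

lemma Tbar_deriv: "has_mat_deriv (\<lambda>x. Tbar (P x)) (dTbar (P x0) d) n n x0"
proof -
  have "has_mat_deriv (\<lambda>x. pT (P x) - pS (P x) * Hinv (P x) * pZ (P x))
     (pT d - ((pS d * Hinv (P x0) + pS (P x0) * dHinv (P x0) d) * pZ (P x0)
       + pS (P x0) * Hinv (P x0) * pZ d)) n n x0"
    by (intro has_mat_deriv_diff dT has_mat_deriv_mult[OF has_mat_deriv_mult[OF dS Hinv_deriv] dZ])
  then show ?thesis
    unfolding Tbar_def dTbar_def
    using add_mult_distrib_mat[OF has_mat_deriv_carrier(2)[OF dS, THEN mult_carrier_mat, OF par_carriers(9)]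
        mult_carrier_mat[OF par_carriers(5) has_mat_deriv_carrier(2)[OF Hinv_deriv]] par_carriers(3)]
    by simp
qed

lemma Bbar_deriv: "has_mat_deriv (\<lambda>x. Bbar (P x)) (dBbar (P x0) d) n m x0"
proof -
  have "has_mat_deriv (\<lambda>x. pB (P x) - pS (P x) * Hinv (P x) * pbeta (P x))
     (pB d - ((pS d * Hinv (P x0) + pS (P x0) * dHinv (P x0) d) * pbeta (P x0)
       + pS (P x0) * Hinv (P x0) * pbeta d)) n m x0"
    by (intro has_mat_deriv_diff dB has_mat_deriv_mult[OF has_mat_deriv_mult[OF dS Hinv_deriv] dbeta])
  then show ?thesis
    unfolding Bbar_def dBbar_def
    using add_mult_distrib_mat[OF has_mat_deriv_carrier(2)[OF dS, THEN mult_carrier_mat, OF par_carriers(9)]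
        mult_carrier_mat[OF par_carriers(5) has_mat_deriv_carrier(2)[OF Hinv_deriv]] par_carriers(4)]
    by simp
qed

lemma dHinv_left_mult: "pS (P x0) * dHinv (P x0) d = (-1) \<cdot>\<^sub>m (pS (P x0) * Hinv (P x0) * pH d * Hinv (P x0))"
proof -
  have "Hinv (P x0) * pH d * Hinv (P x0) \<in> carrier_mat m m"
    using par_carriers(9) has_mat_deriv_carrier(2)[OF dH] by (meson mult_carrier_mat)
  then show ?thesis
    unfolding dHinv_def using par_dims has_mat_deriv_carrier(2)[OF dH]
    by (subst mult_smult_distrib[OF par_carriers(5)]) (simp_all add: assoc_mult_mat_dim)
qed

lemma apred_deriv:
  assumes a: "has_vec_deriv a da n x0"
  shows "has_vec_deriv (\<lambda>x. kf_apred (P x) y k (a x)) (kf_dapred (P x0) d y k (a x0) da) n x0"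
proof -
  have deriv: "has_vec_deriv (\<lambda>x. kf_apred (P x) y k (a x))
     (dTbar (P x0) d *\<^sub>v a x0 + Tbar (P x0) *\<^sub>v da + dBbar (P x0) d *\<^sub>v y (int k - 1)
      + (pS d * Hinv (P x0) + pS (P x0) * dHinv (P x0) d) *\<^sub>v y (int k)) n x0"
    unfolding kf_apred_def
    by (intro has_vec_deriv_add has_vec_deriv_mult_mat_vec[OF Tbar_deriv a]
        has_vec_deriv_mult_mat_vec_const[OF Bbar_deriv obs]
        has_vec_deriv_mult_mat_vec_const[OF has_mat_deriv_mult[OF dS Hinv_deriv] obs])
  have "(pS d * Hinv (P x0) + pS (P x0) * dHinv (P x0) d) *\<^sub>v y (int k)
      = (pS d * Hinv (P x0)) *\<^sub>v y (int k) - (pS (P x0) * Hinv (P x0) * pH d * Hinv (P x0)) *\<^sub>v y (int k)"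
    unfolding dHinv_left_mult using par_carriers has_mat_deriv_carrier(2)[OF dS] has_mat_deriv_carrier(2)[OF dH] obs
    by (intro add_neg_smult_mult_mat_vec[of _ n m]) (auto intro!: mult_carrier_mat simp: par_dims)
  moreover note dims = carrier_matD[OF has_mat_deriv_carrier(2)[OF Tbar_deriv]]
    carrier_matD[OF has_mat_deriv_carrier(2)[OF Bbar_deriv]] carrier_vecD[OF has_vec_deriv_carrier(2)[OF a]]
    carrier_vecD[OF has_vec_deriv_carrier(1)[OF a]] carrier_matD[OF has_mat_deriv_carrier(2)[OF dS]]
    carrier_matD[OF has_mat_deriv_carrier(2)[OF dH]] carrier_vecD[OF obs]
  ultimately have "dTbar (P x0) d *\<^sub>v a x0 + Tbar (P x0) *\<^sub>v da + dBbar (P x0) d *\<^sub>v y (int k - 1)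
      + (pS d * Hinv (P x0) + pS (P x0) * dHinv (P x0) d) *\<^sub>v y (int k) = kf_dapred (P x0) d y k (a x0) da"
    unfolding kf_dapred_def by (intro eq_vecI) (auto simp: par_dims)
  then show ?thesis
    using deriv by simp
qed

lemma pre1_has_deriv:
  assumes U: "has_mat_deriv U dU n n x0"
  shows "has_mat_deriv (\<lambda>x. pre1 (P x) (U x)) (pre1_deriv (P x0) d (U x0) dU) (n + n) n x0"
proof -
  have "has_mat_deriv (\<lambda>x. four_block_mat (Tbar (P x) * U x) (pUQ (P x)) (0\<^sub>m 0 n) (0\<^sub>m 0 n))
      (four_block_mat (dTbar (P x0) d * U x0 + Tbar (P x0) * dU) (pUQ d) (0\<^sub>m 0 n) (0\<^sub>m 0 n)) (n + 0) (n + n) x0"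
    by (intro has_mat_deriv_four_block has_mat_deriv_mult[OF Tbar_deriv U] dUQ has_mat_deriv_const) auto
  from has_mat_deriv_transpose[OF this] show ?thesis
    using carrier_matD[OF has_mat_deriv_carrier(1)[OF U]] carrier_matD[OF has_mat_deriv_carrier(2)[OF U]]
      carrier_matD[OF has_mat_deriv_carrier(2)[OF dUQ]]
    unfolding pre1_def pre1_deriv_def hcat_def by (simp add: par_dims)
qed

lemma pre2_has_deriv:
  assumes R: "has_mat_deriv R dR n n x0"
  shows "has_mat_deriv (\<lambda>x. pre2 (P x) (R x)) (pre2_deriv (P x0) d (R x0) dR) (n + m) (n + m) x0"
proof -
  have "has_mat_deriv (\<lambda>x. four_block_mat (R x) (0\<^sub>m n m) (pZ (P x) * R x) (pUH (P x)))
      (four_block_mat dR (0\<^sub>m n m) (pZ d * R x0 + pZ (P x0) * dR) (pUH d)) (n + m) (n + m) x0"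
    by (intro has_mat_deriv_four_block R has_mat_deriv_mult[OF dZ R] dUH has_mat_deriv_const) auto
  from has_mat_deriv_transpose[OF this] show ?thesis
    using carrier_matD[OF has_mat_deriv_carrier(1)[OF R]] carrier_matD[OF has_mat_deriv_carrier(2)[OF R]]
    unfolding pre2_def pre2_deriv_def by (simp add: par_dims)
qed

end

(* Only the MWGS outputs have to be assumed differentiable; all other quantities are
   differentiable by construction. *)
definition kf_out_differentiable_at :: "(real \<Rightarrow> kf_out) \<Rightarrow> real \<Rightarrow> bool" where
  "kf_out_differentiable_at F x0 \<longleftrightarrow>
     mat_differentiable_at (\<lambda>x. o_UPp (F x)) x0 \<and> mat_differentiable_at (\<lambda>x. o_DPp (F x)) x0 \<and>
     mat_differentiable_at (\<lambda>x. o_UPu (F x)) x0 \<and> mat_differentiable_at (\<lambda>x. o_K (F x)) x0 \<and>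
     mat_differentiable_at (\<lambda>x. o_URe (F x)) x0 \<and> mat_differentiable_at (\<lambda>x. o_DPu (F x)) x0 \<and>
     mat_differentiable_at (\<lambda>x. o_DRe (F x)) x0"

definition kf_dout_has_deriv :: "(real \<Rightarrow> kf_out) \<Rightarrow> kf_dout \<Rightarrow> nat \<Rightarrow> nat \<Rightarrow> real \<Rightarrow> bool" where
  "kf_dout_has_deriv F dF n m x0 \<longleftrightarrow>
     has_vec_deriv (\<lambda>x. o_apred (F x)) (d_apred dF) n x0 \<and>
     has_mat_deriv (\<lambda>x. o_UPp (F x)) (d_UPp dF) n n x0 \<and> has_mat_deriv (\<lambda>x. o_DPp (F x)) (d_DPp dF) n n x0 \<and>
     has_mat_deriv (\<lambda>x. o_UPu (F x)) (d_UPu dF) n n x0 \<and> has_mat_deriv (\<lambda>x. o_DPu (F x)) (d_DPu dF) n n x0 \<and>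
     has_mat_deriv (\<lambda>x. o_URe (F x)) (d_URe dF) m m x0 \<and> has_mat_deriv (\<lambda>x. o_DRe (F x)) (d_DRe dF) m m x0 \<and>
     has_mat_deriv (\<lambda>x. o_K (F x)) (d_K dF) n m x0 \<and>
     has_vec_deriv (\<lambda>x. o_eb (F x)) (d_eb dF) m x0 \<and> has_vec_deriv (\<lambda>x. o_aupd (F x)) (d_aupd dF) n x0"

locale step_curve = param_curve +
  fixes k :: nat and a :: "real \<Rightarrow> real vec" and U D :: "real \<Rightarrow> real mat"
    and da :: "real vec" and dU dD :: "real mat"
  assumes a_deriv: "has_vec_deriv a da n x0" and U_deriv: "has_mat_deriv U dU n n x0"
    and D_deriv: "has_mat_deriv D dD n n x0"
    and ok1: "\<And>x. mwgs_ok (pre1 (P x) (U x)) (bdiag (D x) (pDQ (P x)))"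
    and ok2: "\<And>x. mwgs_ok (pre2 (P x) (o_UPp (kf_step (P x) y k (a x, U x, D x))))
                (bdiag (o_DPp (kf_step (P x) y k (a x, U x, D x))) (pDH (P x)))"
    and differentiable: "kf_out_differentiable_at (\<lambda>x. kf_step (P x) y k (a x, U x, D x)) x0"
begin

abbreviation ou :: "real \<Rightarrow> kf_out" where
  "ou x \<equiv> kf_step (P x) y k (a x, U x, D x)"

abbreviation dou :: kf_dout where
  "dou \<equiv> kf_dstep (P x0) d y k (a x0, U x0, D x0) (da, dU, dD)"

lemma out_differentiable:
  "mat_differentiable_at (\<lambda>x. o_UPp (ou x)) x0" "mat_differentiable_at (\<lambda>x. o_DPp (ou x)) x0"
  "mat_differentiable_at (\<lambda>x. o_UPu (ou x)) x0" "mat_differentiable_at (\<lambda>x. o_K (ou x)) x0"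
  "mat_differentiable_at (\<lambda>x. o_URe (ou x)) x0" "mat_differentiable_at (\<lambda>x. o_DPu (ou x)) x0"
  "mat_differentiable_at (\<lambda>x. o_DRe (ou x)) x0"
  using differentiable by (simp_all add: kf_out_differentiable_at_def)

lemma first_stage_carrier: "o_UPp (ou x) \<in> carrier_mat n n" "o_DPp (ou x) \<in> carrier_mat n n"
proof -
  have "pre1 (P x) (U x) \<in> carrier_mat (n + n) n"
    using has_mat_deriv_carrier(1)[OF pre1_has_deriv[OF U_deriv]] .
  then show "o_UPp (ou x) \<in> carrier_mat n n" "o_DPp (ou x) \<in> carrier_mat n n"
    using mwgs_spec_mwgs(1)[OF ok1[of x]] by (auto simp: kf_step_simps mwgs_spec_def Let_def)
qed

lemma first_stage_deriv:
  "has_mat_deriv (\<lambda>x. o_UPp (ou x)) (d_UPp dou) n n x0"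
  "has_mat_deriv (\<lambda>x. o_DPp (ou x)) (d_DPp dou) n n x0"
proof -
  obtain R' where R': "has_mat_deriv (\<lambda>x. o_UPp (ou x)) R' n n x0"
    using has_mat_deriv_exists[of "\<lambda>x. o_UPp (ou x)", OF first_stage_carrier(1) out_differentiable(1)] by blast
  obtain E' where E': "has_mat_deriv (\<lambda>x. o_DPp (ou x)) E' n n x0"
    using has_mat_deriv_exists[of "\<lambda>x. o_DPp (ou x)", OF first_stage_carrier(2) out_differentiable(2)] by blast
  have "(d_UPp dou, d_DPp dou) = (R', E')"
    unfolding kf_dstep_simps
    by (rule diff_ud_correct[OF ok1 pre1_has_deriv[OF U_deriv] has_mat_deriv_bdiag[OF D_deriv dDQ]])
      (use R' E' in \<open>simp_all add: kf_step_simps\<close>)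
  then show "has_mat_deriv (\<lambda>x. o_UPp (ou x)) (d_UPp dou) n n x0"
    "has_mat_deriv (\<lambda>x. o_DPp (ou x)) (d_DPp dou) n n x0"
    using R' E' by simp_all
qed

lemmas second_stage_blocks = kf_step_blocks[OF ok2 first_stage_carrier(1) par_carriers(12)]

lemma second_stage_deriv:
  "has_mat_deriv (\<lambda>x. o_UPu (ou x)) (d_UPu dou) n n x0" "has_mat_deriv (\<lambda>x. o_K (ou x)) (d_K dou) n m x0"
  "has_mat_deriv (\<lambda>x. o_URe (ou x)) (d_URe dou) m m x0"
  "has_mat_deriv (\<lambda>x. o_DPu (ou x)) (d_DPu dou) n n x0" "has_mat_deriv (\<lambda>x. o_DRe (ou x)) (d_DRe dou) m m x0"
proof -
  note blocks = second_stage_blocks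
  obtain G1 where G1: "has_mat_deriv (\<lambda>x. o_UPu (ou x)) G1 n n x0"
    using has_mat_deriv_exists[of "\<lambda>x. o_UPu (ou x)", OF blocks(3) out_differentiable(3)] by blast
  obtain G2 where G2: "has_mat_deriv (\<lambda>x. o_K (ou x)) G2 n m x0"
    using has_mat_deriv_exists[of "\<lambda>x. o_K (ou x)", OF blocks(4) out_differentiable(4)] by blast
  obtain G4 where G4: "has_mat_deriv (\<lambda>x. o_URe (ou x)) G4 m m x0"
    using has_mat_deriv_exists[of "\<lambda>x. o_URe (ou x)", OF blocks(5) out_differentiable(5)] by blast
  obtain G5 where G5: "has_mat_deriv (\<lambda>x. o_DPu (ou x)) G5 n n x0"
    using has_mat_deriv_exists[of "\<lambda>x. o_DPu (ou x)", OF blocks(6) out_differentiable(6)] by blast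
  obtain G8 where G8: "has_mat_deriv (\<lambda>x. o_DRe (ou x)) G8 m m x0"
    using has_mat_deriv_exists[of "\<lambda>x. o_DRe (ou x)", OF blocks(7) out_differentiable(7)] by blast
  have "diff_ud (pre2 (P x0) (o_UPp (ou x0))) (bdiag (o_DPp (ou x0)) (pDH (P x0)))
      (pre2_deriv (P x0) d (o_UPp (ou x0)) (d_UPp dou)) (bdiag (d_DPp dou) (pDH d))
    = (four_block_mat G1 G2 (0\<^sub>m m n) G4, four_block_mat G5 (0\<^sub>m n m) (0\<^sub>m m n) G8)"
  proof (rule diff_ud_correct[OF ok2 pre2_has_deriv[OF first_stage_deriv(1)]
        has_mat_deriv_bdiag[OF first_stage_deriv(2) dDH]])
    show "has_mat_deriv (\<lambda>x. mwgs_R (pre2 (P x) (o_UPp (ou x))) (bdiag (o_DPp (ou x)) (pDH (P x))))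
        (four_block_mat G1 G2 (0\<^sub>m m n) G4) (n + m) (n + m) x0"
      unfolding blocks(1) by (intro has_mat_deriv_four_block G1 G2 G4 has_mat_deriv_const) simp
    show "has_mat_deriv (\<lambda>x. mwgs_DR (pre2 (P x) (o_UPp (ou x))) (bdiag (o_DPp (ou x)) (pDH (P x))))
        (four_block_mat G5 (0\<^sub>m n m) (0\<^sub>m m n) G8) (n + m) (n + m) x0"
      unfolding blocks(2) by (intro has_mat_deriv_four_block G5 G8 has_mat_deriv_const) simp_all
  qed
  note dblocks = kf_dstep_blocks[OF this has_mat_deriv_carrier(2)[OF G1] has_mat_deriv_carrier(2)[OF G2] _
      has_mat_deriv_carrier(2)[OF G4] has_mat_deriv_carrier(2)[OF G5] _ _ has_mat_deriv_carrier(2)[OF G8]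
      first_stage_carrier(1)]
  show "has_mat_deriv (\<lambda>x. o_UPu (ou x)) (d_UPu dou) n n x0" "has_mat_deriv (\<lambda>x. o_K (ou x)) (d_K dou) n m x0"
    "has_mat_deriv (\<lambda>x. o_URe (ou x)) (d_URe dou) m m x0"
    "has_mat_deriv (\<lambda>x. o_DPu (ou x)) (d_DPu dou) n n x0" "has_mat_deriv (\<lambda>x. o_DRe (ou x)) (d_DRe dou) m m x0"
    using G1 G2 G4 G5 G8 by (simp_all add: dblocks)
qed

lemma update_deriv:
  "has_vec_deriv (\<lambda>x. o_apred (ou x)) (d_apred dou) n x0"
  "has_vec_deriv (\<lambda>x. o_eb (ou x)) (d_eb dou) m x0"
  "has_vec_deriv (\<lambda>x. o_aupd (ou x)) (d_aupd dou) n x0"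
proof -
  note blocks = second_stage_blocks
  show ap: "has_vec_deriv (\<lambda>x. o_apred (ou x)) (d_apred dou) n x0"
    unfolding kf_step_simps kf_dstep_simps by (rule apred_deriv[OF a_deriv])
  define e' where "e' = 0\<^sub>v m - (pZ d *\<^sub>v o_apred (ou x0) + pZ (P x0) *\<^sub>v d_apred dou) - pbeta d *\<^sub>v y (int k)"
  have e: "has_vec_deriv (\<lambda>x. o_e (ou x)) e' m x0"
    unfolding kf_step_simps(4) e'_def
    by (intro has_vec_deriv_diff has_vec_deriv_const obs has_vec_deriv_mult_mat_vec[OF dZ ap]
        has_vec_deriv_mult_mat_vec_const[OF dbeta obs])
  define Ui where "Ui = minv (o_URe (ou x0))"
  have "has_mat_deriv (\<lambda>x. minv (o_URe (ou x))) ((-1) \<cdot>\<^sub>m (Ui * d_URe dou * Ui)) m m x0"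
    unfolding Ui_def using second_stage_deriv(3) det_unit_upper[OF blocks(5,8)]
    by (intro has_mat_deriv_minv) simp_all
  from has_vec_deriv_mult_mat_vec[OF this e]
  have eb: "has_vec_deriv (\<lambda>x. o_eb (ou x)) ((-1) \<cdot>\<^sub>m (Ui * d_URe dou * Ui) *\<^sub>v o_e (ou x0) + Ui *\<^sub>v e') m x0"
    unfolding kf_step_simps(5) Ui_def .
  have cUi: "Ui \<in> carrier_mat m m"
    unfolding Ui_def using det_unit_upper[OF blocks(5,8)] by (intro minv_mat(1)[OF blocks(5)]) simp
  note dims = carrier_matD[OF cUi] carrier_matD[OF has_mat_deriv_carrier(2)[OF second_stage_deriv(3)]]
    carrier_vecD[OF has_vec_deriv_carrier(1)[OF e]] carrier_matD[OF has_mat_deriv_carrier(2)[OF dZ]]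
    carrier_vecD[OF has_vec_deriv_carrier(1)[OF ap]] carrier_vecD[OF has_vec_deriv_carrier(2)[OF ap]]
    carrier_matD[OF has_mat_deriv_carrier(2)[OF dbeta]] carrier_vecD[OF obs] par_dims
  have "(-1) \<cdot>\<^sub>m (Ui * d_URe dou * Ui) *\<^sub>v o_e (ou x0) + Ui *\<^sub>v e' = d_eb dou"
    unfolding kf_dstep_simps(3) e'_def Ui_def[symmetric]
    by (intro eq_vecI) (auto simp: dims scalar_prod_def sum_negf sum_subtractf sum.distrib algebra_simps)
  with eb show eb': "has_vec_deriv (\<lambda>x. o_eb (ou x)) (d_eb dou) m x0"
    by simp
  have "has_vec_deriv (\<lambda>x. o_aupd (ou x)) (d_apred dou + (d_K dou *\<^sub>v o_eb (ou x0) + o_K (ou x0) *\<^sub>v d_eb dou)) n x0"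
    unfolding kf_step_simps(6) by (intro has_vec_deriv_add ap has_vec_deriv_mult_mat_vec[OF second_stage_deriv(2) eb'])
  then show "has_vec_deriv (\<lambda>x. o_aupd (ou x)) (d_aupd dou) n x0"
    unfolding kf_dstep_simps(4)
    using has_vec_deriv_carrier[OF ap] has_vec_deriv_carrier[OF eb'] has_mat_deriv_carrier[OF second_stage_deriv(2)]
    by (subst assoc_add_vec[of _ n]) (auto intro!: mult_mat_vec_carrier)
qed

lemma kf_step_has_deriv: "kf_dout_has_deriv ou dou n m x0"
  unfolding kf_dout_has_deriv_def using first_stage_deriv second_stage_deriv update_deriv by blast

end

section \<open>Propagation along the filter\<close>

lemma mwgs_calls_ok_step:
  assumes "mwgs_calls_ok p y N" "k < N" "kf_filt p y k = (a, U, D)"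
  shows "mwgs_ok (pre1 p U) (bdiag D (pDQ p))"
    "mwgs_ok (pre2 p (o_UPp (kf_step p y k (a, U, D)))) (bdiag (o_DPp (kf_step p y k (a, U, D))) (pDH p))"
proof -
  have "mwgs_ok (pre1 p U) (bdiag D (pDQ p)) \<and>
      (case mwgs (pre1 p U) (bdiag D (pDQ p)) of (W1, R1, DR1) \<Rightarrow> mwgs_ok (pre2 p R1) (bdiag DR1 (pDH p)))"
    using assms unfolding mwgs_calls_ok_def by fastforce
  then show "mwgs_ok (pre1 p U) (bdiag D (pDQ p))"
    "mwgs_ok (pre2 p (o_UPp (kf_step p y k (a, U, D)))) (bdiag (o_DPp (kf_step p y k (a, U, D))) (pDH p))"
    by (simp_all add: kf_step_simps mwgs_R_def mwgs_DR_def split_def)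
qed

context param_curve
begin

lemma kf_out_has_deriv:
  assumes ok: "\<And>x. mwgs_calls_ok (P x) y N"
    and diff: "\<And>k. k < N \<Longrightarrow> kf_out_differentiable_at (\<lambda>x. kf_out (P x) y k) x0"
    and "k < N"
  shows "kf_dout_has_deriv (\<lambda>x. kf_out (P x) y k) (kf_dout (P x0) d y k) n m x0"
proof -
  define state_deriv where "state_deriv k \<longleftrightarrow>
      has_vec_deriv (\<lambda>x. fst (kf_filt (P x) y k)) (fst (kf_dfilt (P x0) d y k)) n x0 \<and>
      has_mat_deriv (\<lambda>x. fst (snd (kf_filt (P x) y k))) (fst (snd (kf_dfilt (P x0) d y k))) n n x0 \<and>
      has_mat_deriv (\<lambda>x. snd (snd (kf_filt (P x) y k))) (snd (snd (kf_dfilt (P x0) d y k))) n n x0" for k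
  have step: "kf_dout_has_deriv (\<lambda>x. kf_out (P x) y k) (kf_dout (P x0) d y k) n m x0"
    if "k < N" "state_deriv k" for k
  proof -
    have filt: "kf_filt (P x) y k = (fst (kf_filt (P x) y k), fst (snd (kf_filt (P x) y k)), snd (snd (kf_filt (P x) y k)))"
      for x by simp
    interpret step_curve P d x0 n m y k "\<lambda>x. fst (kf_filt (P x) y k)" "\<lambda>x. fst (snd (kf_filt (P x) y k))"
      "\<lambda>x. snd (snd (kf_filt (P x) y k))" "fst (kf_dfilt (P x0) d y k)" "fst (snd (kf_dfilt (P x0) d y k))"
      "snd (snd (kf_dfilt (P x0) d y k))"
      using that diff mwgs_calls_ok_step[OF ok that(1) filt]
      by unfold_locales (auto simp: state_deriv_def kf_out_def)
    show ?thesis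
      using kf_step_has_deriv by (simp add: kf_out_def kf_dout_def)
  qed
  have "state_deriv k" if "k \<le> N" for k
    using that
  proof (induction k)
    case 0
    then show ?case
      unfolding state_deriv_def using da0 dUPi dDPi by simp
  next
    case (Suc k)
    then show ?case
      using step[of k] by (simp add: state_deriv_def kf_dout_has_deriv_def kf_out_def kf_dout_def Let_def)
  qed
  then show ?thesis
    using step \<open>k < N\<close> by simp
qed

end

lemma has_mat_deriv_of_mat_pderiv:
  assumes "mat_pderiv F \<theta> i G" "\<And>t. F t \<in> carrier_mat nr nc"
  shows "has_mat_deriv (\<lambda>x. F (\<theta>(i := x))) G nr nc (\<theta> i)"
  using assms carrier_matD[OF assms(2)] unfolding mat_pderiv_def has_mat_deriv_def by auto

lemma has_vec_deriv_of_vec_pderiv: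
  assumes "vec_pderiv F \<theta> i g" "\<And>t. F t \<in> carrier_vec n"
  shows "has_vec_deriv (\<lambda>x. F (\<theta>(i := x))) g n (\<theta> i)"
  using assms carrier_vecD[OF assms(2)] unfolding vec_pderiv_def has_vec_deriv_def by auto

lemma mat_pderiv_of_has_mat_deriv:
  assumes "has_mat_deriv (\<lambda>x. F (\<theta>(i := x))) G nr nc (\<theta> i)"
  shows "mat_pderiv F \<theta> i G"
  using assms has_mat_deriv_carrier(1)[OF assms, of "\<theta> i"]
  unfolding mat_pderiv_def has_mat_deriv_def by auto

lemma vec_pderiv_of_has_vec_deriv:
  assumes "has_vec_deriv (\<lambda>x. F (\<theta>(i := x))) g n (\<theta> i)"
  shows "vec_pderiv F \<theta> i g"
  using assms has_vec_deriv_carrier(1)[OF assms, of "\<theta> i"]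
  unfolding vec_pderiv_def has_vec_deriv_def by auto

lemma mat_differentiable_at_of_pdiff:
  assumes "mat_pdiff F \<theta> i"
  shows "mat_differentiable_at (\<lambda>x. F (\<theta>(i := x))) (\<theta> i)"
  using assms unfolding mat_pdiff_def mat_pderiv_def mat_differentiable_at_def real_differentiable_def
  by (simp add: fun_upd_triv) blast

lemma kf_out_differentiable_at_of_pdiff:
  assumes "kf_out_pdiff F \<theta> i"
  shows "kf_out_differentiable_at (\<lambda>x. F (\<theta>(i := x))) (\<theta> i)"
  using assms mat_differentiable_at_of_pdiff[of "\<lambda>t. o_UPp (F t)"] mat_differentiable_at_of_pdiff[of "\<lambda>t. o_DPp (F t)"]
    mat_differentiable_at_of_pdiff[of "\<lambda>t. o_UPu (F t)"] mat_differentiable_at_of_pdiff[of "\<lambda>t. o_K (F t)"]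
    mat_differentiable_at_of_pdiff[of "\<lambda>t. o_URe (F t)"] mat_differentiable_at_of_pdiff[of "\<lambda>t. o_DPu (F t)"]
    mat_differentiable_at_of_pdiff[of "\<lambda>t. o_DRe (F t)"]
  unfolding kf_out_pdiff_def kf_out_differentiable_at_def by simp

lemma param_curve_of_par_pderiv:
  assumes "\<And>t. model_ok n m (par t)" "\<And>j. y j \<in> carrier_vec m" "par_pderiv par \<theta> i dpar"
  shows "param_curve (\<lambda>x. par (\<theta>(i := x))) dpar (\<theta> i) n m y"
  using assms model_ok_carriers[OF assms(1)] unfolding par_pderiv_def
  by unfold_locales (auto intro: has_mat_deriv_of_mat_pderiv has_vec_deriv_of_vec_pderiv)

theorem proposition3:
  fixes par :: "('p::finite \<Rightarrow> real) \<Rightarrow> kf_par"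
    and y :: "int \<Rightarrow> real vec"
    and n m N :: nat
    and \<theta> :: "'p \<Rightarrow> real"
    and i :: 'p
    and dpar :: kf_par
  assumes model: "\<forall>t. model_ok n m (par t)"
    and obs: "\<forall>k. y k \<in> carrier_vec m"
    and wd: "\<forall>t. mwgs_calls_ok (par t) y N"
    and dpar: "par_pderiv par \<theta> i dpar"
    and diff: "\<forall>k<N. kf_out_pdiff (\<lambda>t. kf_out (par t) y k) \<theta> i"
  shows "\<forall>k<N.
     vec_pderiv (\<lambda>t. o_apred (kf_out (par t) y k)) \<theta> i (d_apred (kf_dout (par \<theta>) dpar y k)) \<and>
     mat_pderiv (\<lambda>t. o_UPp (kf_out (par t) y k)) \<theta> i (d_UPp (kf_dout (par \<theta>) dpar y k)) \<and>
     mat_pderiv (\<lambda>t. o_DPp (kf_out (par t) y k)) \<theta> i (d_DPp (kf_dout (par \<theta>) dpar y k)) \<and>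
     mat_pderiv (\<lambda>t. o_UPu (kf_out (par t) y k)) \<theta> i (d_UPu (kf_dout (par \<theta>) dpar y k)) \<and>
     mat_pderiv (\<lambda>t. o_DPu (kf_out (par t) y k)) \<theta> i (d_DPu (kf_dout (par \<theta>) dpar y k)) \<and>
     mat_pderiv (\<lambda>t. o_URe (kf_out (par t) y k)) \<theta> i (d_URe (kf_dout (par \<theta>) dpar y k)) \<and>
     mat_pderiv (\<lambda>t. o_DRe (kf_out (par t) y k)) \<theta> i (d_DRe (kf_dout (par \<theta>) dpar y k)) \<and>
     mat_pderiv (\<lambda>t. o_K (kf_out (par t) y k)) \<theta> i (d_K (kf_dout (par \<theta>) dpar y k)) \<and>
     vec_pderiv (\<lambda>t. o_eb (kf_out (par t) y k)) \<theta> i (d_eb (kf_dout (par \<theta>) dpar y k)) \<and>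
     vec_pderiv (\<lambda>t. o_aupd (kf_out (par t) y k)) \<theta> i (d_aupd (kf_dout (par \<theta>) dpar y k))"
proof -
  interpret param_curve "\<lambda>x. par (\<theta>(i := x))" dpar "\<theta> i" n m y
    using model obs dpar by (intro param_curve_of_par_pderiv) auto
  have "kf_dout_has_deriv (\<lambda>x. kf_out (par (\<theta>(i := x))) y k) (kf_dout (par \<theta>) dpar y k) n m (\<theta> i)"
    if "k < N" for k
    using kf_out_has_deriv[OF _ kf_out_differentiable_at_of_pdiff that] wd diff by simp
  then show ?thesis
    unfolding kf_dout_has_deriv_def by (blast intro: mat_pderiv_of_has_mat_deriv vec_pderiv_of_has_vec_deriv)
qed

end
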